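(* Let $\mu$ be a monotone system with support $\Omega\subseteq\{0,1\}^V$, $|V|=n$, and let $\theta\in(0,1)$. Then for every $\epsilon\in(0,1)$, \[ T^{\mathrm{GD}}_{\mathrm{mix}\text{-}\mathbf 1_V}(\mu,\epsilon)\le T^{\mathrm{FD}}_{\mathrm{mix}}\left(\mu,\theta,\tfrac\epsilon2\right)\cdot T^{\mathrm{tilted}}_{\mathrm{mix}}(\mu,\theta,\delta),\qquad\text{where }\delta=\frac{\epsilon}{2T^{\mathrm{FD}}_{\mathrm{mix}}(\mu,\theta,\frac\epsilon2)}. \]
   Context: Partial order on $\{0,1\}^S$: $X\preceq Y$ iff $X_v\le Y_v$ for all $v$. For a feasible (positive-probability) pinning $\sigma$ on $S\subseteq V$, $\mu^\sigma$ is $\mu$ conditioned on $\sigma$ and $\mu^\sigma_v$ its marginal at $v$; $\mu_\Lambda$ is the marginal on $\Lambda$. Monotone system: for every $v$ and all feasible $\sigma\preceq\tau$ in $\{0,1\}^{V\setminus\{v\}}$, $\mu^\sigma_v(1)\le\mu^\tau_v(1)$. Tilted distribution: $(\theta*\mu)(\sigma)\propto\mu(\sigma)\theta^{\|\sigma\|_1}$ on $\Omega$. Glauber dynamics $P$ on $\nu$: pick $v$ uniformly, resample $X_v\sim\nu_v^{X_{V\setminus\{v\}}}$. $T^{\mathrm{GD}}_{\mathrm{mix}\text{-}X_0}(\nu,\epsilon)=\min\{t:d_{\mathrm{TV}}(P^t(X_0,\cdot),\nu)\le\epsilon\}$; $T^{\mathrm{GD}}_{\mathrm{mix}}(\nu,\epsilon)$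 is the maximum of this over all feasible $X_0$. $T^{\mathrm{tilted}}_{\mathrm{mix}}(\mu,\theta,\epsilon)=\max\{T^{\mathrm{GD}}_{\mathrm{mix}}((\theta*\mu)^{\mathbf 1_\Lambda},\epsilon):\Lambda\subseteq V,\mu_\Lambda(\mathbf 1_\Lambda)>0\}$. Field dynamics $P_{\theta,\mu}$: from $X\in\Omega$, build a random $S\subseteq V$ including each $v$ independently with probability $\theta$ if $X_v=1$ and $1$ if $X_v=0$; then resample $X\sim(\theta*\mu)^{\mathbf 1_{V\setminus S}}$. $T^{\mathrm{FD}}_{\mathrm{mix}}(\mu,\theta,\epsilon)=\max_{X\in\Omega}\min\{t:d_{\mathrm{TV}}(P^t_{\theta,\mu}(X,\cdot),\mu)\le\epsilon\}$. *)

theory Defs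
  imports "HOL-Analysis.Analysis" "HOL-Library.Extended_Nat"
begin

text \<open>Configurations in {0,1}^V are represented by the subset of V of vertices
carrying value 1 (type 'v set). The partial order is set inclusion and the
1-norm is card.\<close>

definition is_dist :: "'v set \<Rightarrow> ('v set \<Rightarrow> real) \<Rightarrow> bool" where
  "is_dist V mu \<longleftrightarrow> (\<forall>X. 0 \<le> mu X) \<and> (\<forall>X. \<not> X \<subseteq> V \<longrightarrow> mu X = 0)
     \<and> (\<Sum>X\<in>Pow V. mu X) = 1"

definition support :: "'v set \<Rightarrow> ('v set \<Rightarrow> real) \<Rightarrow> 'v set set" where
  "support V mu = {X \<in> Pow V. mu X > 0}"

text \<open>A pinning on S \<subseteq> V is given by the subset sg \<subseteq> S of vertices pinned to 1;
a configuration X is consistent with it iff X \<inter> S = sg.\<close>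

definition pin_mass :: "'v set \<Rightarrow> ('v set \<Rightarrow> real) \<Rightarrow> 'v set \<Rightarrow> 'v set \<Rightarrow> real" where
  "pin_mass V mu S sg = (\<Sum>Y\<in>{Y \<in> Pow V. Y \<inter> S = sg}. mu Y)"

definition feasible :: "'v set \<Rightarrow> ('v set \<Rightarrow> real) \<Rightarrow> 'v set \<Rightarrow> 'v set \<Rightarrow> bool" where
  "feasible V mu S sg \<longleftrightarrow> sg \<subseteq> S \<and> S \<subseteq> V \<and> pin_mass V mu S sg > 0"

definition cond :: "'v set \<Rightarrow> ('v set \<Rightarrow> real) \<Rightarrow> 'v set \<Rightarrow> 'v set \<Rightarrow> 'v set \<Rightarrow> real" where
  "cond V mu S sg Y =
     (if Y \<subseteq> V \<and> Y \<inter> S = sg then mu Y / pin_mass V mu S sg else 0)"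

definition marg1 :: "'v set \<Rightarrow> ('v set \<Rightarrow> real) \<Rightarrow> 'v \<Rightarrow> real" where
  "marg1 V nu v = (\<Sum>Y\<in>{Y \<in> Pow V. v \<in> Y}. nu Y)"

definition monotone_system :: "'v set \<Rightarrow> ('v set \<Rightarrow> real) \<Rightarrow> bool" where
  "monotone_system V mu \<longleftrightarrow>
     (\<forall>v\<in>V. \<forall>sg tu. sg \<subseteq> tu \<and>
        feasible V mu (V - {v}) sg \<and> feasible V mu (V - {v}) tu \<longrightarrow>
        marg1 V (cond V mu (V - {v}) sg) v \<le> marg1 V (cond V mu (V - {v}) tu) v)"

definition tilt :: "'v set \<Rightarrow> real \<Rightarrow> ('v set \<Rightarrow> real) \<Rightarrow> 'v set \<Rightarrow> real" where
  "tilt V theta mu X =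
     (if X \<subseteq> V then mu X * theta ^ card X / (\<Sum>Y\<in>Pow V. mu Y * theta ^ card Y) else 0)"

definition glauber :: "'v set \<Rightarrow> ('v set \<Rightarrow> real) \<Rightarrow> 'v set \<Rightarrow> 'v set \<Rightarrow> real" where
  "glauber V nu X Y =
     (\<Sum>v\<in>V. (if Y \<subseteq> V \<and> Y - {v} = X - {v}
              then cond V nu (V - {v}) (X - {v}) Y else 0)) / real (card V)"

text \<open>Field dynamics kernel: S contains every 0-vertex of X and each 1-vertex of X
independently with probability theta; then resample from (theta * mu) pinned to 1
on V - S.\<close>
definition field_dyn :: "'v set \<Rightarrow> ('v set \<Rightarrow> real) \<Rightarrow> real \<Rightarrow> 'v set \<Rightarrow> 'v set \<Rightarrow> real" where
  "field_dyn V mu theta X Y =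
     (\<Sum>S\<in>{S \<in> Pow V. V - X \<subseteq> S}.
        theta ^ card (S \<inter> X) * (1 - theta) ^ card (X - S) *
        cond V (tilt V theta mu) (V - S) (V - S) Y)"

definition step :: "'v set \<Rightarrow> ('v set \<Rightarrow> 'v set \<Rightarrow> real) \<Rightarrow> ('v set \<Rightarrow> real) \<Rightarrow> 'v set \<Rightarrow> real" where
  "step V P d = (\<lambda>Y. \<Sum>X\<in>Pow V. d X * P X Y)"

definition distr_at :: "'v set \<Rightarrow> ('v set \<Rightarrow> 'v set \<Rightarrow> real) \<Rightarrow> 'v set \<Rightarrow> nat \<Rightarrow> 'v set \<Rightarrow> real" where
  "distr_at V P x0 t = (step V P ^^ t) (\<lambda>Y. if Y = x0 then 1 else 0)"

definition dTV :: "'v set \<Rightarrow> ('v set \<Rightarrow> real) \<Rightarrow> ('v set \<Rightarrow> real) \<Rightarrow> real" where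
  "dTV V p q = (\<Sum>Y\<in>Pow V. \<bar>p Y - q Y\<bar>) / 2"

definition mix_from :: "'v set \<Rightarrow> ('v set \<Rightarrow> 'v set \<Rightarrow> real) \<Rightarrow> ('v set \<Rightarrow> real)
                        \<Rightarrow> 'v set \<Rightarrow> real \<Rightarrow> enat" where
  "mix_from V P target x0 eps =
     (if \<exists>t. dTV V (distr_at V P x0 t) target \<le> eps
      then enat (LEAST t. dTV V (distr_at V P x0 t) target \<le> eps) else \<infinity>)"

definition T_GD_from :: "'v set \<Rightarrow> ('v set \<Rightarrow> real) \<Rightarrow> 'v set \<Rightarrow> real \<Rightarrow> enat" where
  "T_GD_from V nu x0 eps = mix_from V (glauber V nu) nu x0 eps"

definition T_GD :: "'v set \<Rightarrow> ('v set \<Rightarrow> real) \<Rightarrow> real \<Rightarrow> enat" where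
  "T_GD V nu eps = (SUP x0 \<in> support V nu. T_GD_from V nu x0 eps)"

definition T_tilted :: "'v set \<Rightarrow> ('v set \<Rightarrow> real) \<Rightarrow> real \<Rightarrow> real \<Rightarrow> enat" where
  "T_tilted V mu theta eps =
     (SUP L \<in> {L. L \<subseteq> V \<and> pin_mass V mu L L > 0}.
        T_GD V (cond V (tilt V theta mu) L L) eps)"

definition T_FD :: "'v set \<Rightarrow> ('v set \<Rightarrow> real) \<Rightarrow> real \<Rightarrow> real \<Rightarrow> enat" where
  "T_FD V mu theta eps =
     (SUP X \<in> support V mu. mix_from V (field_dyn V mu theta) mu X eps)"

end

theory Submission
  imports Defs
begin

text \<open>Glauber dynamics for \<open>mu\<close> is the configuration marginal of a chain on pairs \<open>(X, R)\<close>,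
  \<open>R \<subseteq> X\<close>, with stationary law \<open>mu X * (1 - theta) ^ card R * theta ^ card (X - R)\<close>: refresh \<open>R\<close>
  given \<open>X\<close>, then do heat-bath updates of the pair \<open>(X\<^sub>v, R\<^sub>v)\<close> at random sites \<open>v\<close>.
  Censoring these updates to \<open>X\<^sub>v\<close> alone, with \<open>R\<close> frozen, gives a chain that on each pinning
  \<open>R\<close> runs Glauber dynamics for \<open>theta * mu\<close> pinned to 1 on \<open>R\<close>; a refresh followed by
  \<open>m = T_tilted\<close> such steps is a step of field dynamics up to an error \<open>delta\<close> in total variation.
  All these kernels are monotone (the site updates by the monotone-system hypothesis), and both chains
  start from the maximal pair \<open>(V, V)\<close>, so by the Peres--Winkler censoring inequality the
  uncensored chain is the closer one to equilibrium. After \<open>k = T_FD(eps/2)\<close> rounds it has made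
  \<open>k * m\<close> Glauber steps and is within \<open>eps/2 + k * delta = eps\<close> of \<open>mu\<close>.\<close>

lemma convex_bound_ge:
  fixes t x a b :: real
  assumes "0 \<le> t" "t \<le> 1" "x \<le> a" "x \<le> b"
  shows "x \<le> t * a + (1 - t) * b"
proof -
  have "t * x + (1 - t) * x \<le> t * a + (1 - t) * b"
    using assms by (intro add_mono mult_left_mono) auto
  then show ?thesis by (simp add: algebra_simps)
qed

lemma two_point_average_mono:
  fixes a0 a1 b0 b1 x0 x1 y0 y1 :: real
  assumes "a0 \<ge> 0" "a1 \<ge> 0" "b0 \<ge> 0" "b1 \<ge> 0" "a0 + a1 > 0" "b0 + b1 > 0"
    and cross: "a1 * b0 \<le> a0 * b1"
    and le00: "a0 > 0 \<Longrightarrow> b0 > 0 \<Longrightarrow> x0 \<le> y0"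
    and le11: "a1 > 0 \<Longrightarrow> b1 > 0 \<Longrightarrow> x1 \<le> y1"
    and le01: "a0 > 0 \<Longrightarrow> b1 > 0 \<Longrightarrow> x0 \<le> y1"
  shows "(a0 * x0 + a1 * x1) / (a0 + a1) \<le> (b0 * y0 + b1 * y1) / (b0 + b1)"
proof -
  have prod_nonneg: "a * b * (y - x) \<ge> 0" if "a \<ge> 0" "b \<ge> 0" "a > 0 \<Longrightarrow> b > 0 \<Longrightarrow> x \<le> y"
    for a b x y :: real
    using that by (cases "a > 0 \<and> b > 0") (auto simp: not_less)
  have t00: "a0 * b0 * (y0 - x0) \<ge> 0" and t01: "a0 * b1 * (y1 - x0) \<ge> 0"
    and t11: "a1 * b1 * (y1 - x1) \<ge> 0"
    using assms by (auto intro!: prod_nonneg)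
  \<comment> \<open>The only mixed term of the wrong sign is paid for by the cross inequality.\<close>
  have t10: "a1 * b0 * (y0 - x1) + a0 * b1 * (y1 - x0) \<ge> 0"
  proof (cases "a1 * b0 > 0")
    case True
    then have "a1 > 0" "b0 > 0" using assms(2,3) by (auto simp: zero_less_mult_iff)
    moreover have "a0 * b1 > 0" using True cross by linarith
    then have "a0 > 0" "b1 > 0" using assms(1,4) by (auto simp: zero_less_mult_iff)
    ultimately have xy: "x0 \<le> y0" "x1 \<le> y1" "x0 \<le> y1" using le00 le11 le01 by auto
    have "a1 * b0 * (y1 - x0) \<le> a0 * b1 * (y1 - x0)"
      using cross xy(3) by (intro mult_right_mono) auto
    moreover have "a1 * b0 * ((y0 - x0) + (y1 - x1)) \<ge> 0"
      using \<open>a1 > 0\<close> \<open>b0 > 0\<close> xy by (intro mult_nonneg_nonneg) auto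
    ultimately show ?thesis by (simp add: algebra_simps)
  next
    case False
    then have "a1 * b0 = 0" using assms(2,3) by (simp add: zero_less_mult_iff order.order_iff_strict)
    then show ?thesis using t01 by auto
  qed
  have "(a0 * x0 + a1 * x1) * (b0 + b1) \<le> (b0 * y0 + b1 * y1) * (a0 + a1)"
    using t00 t01 t11 t10 by (simp add: algebra_simps)
  then show ?thesis using assms(5,6) by (simp add: divide_simps)
qed

section \<open>Heat-bath kernels and the censoring inequality\<close>

locale ordered_weighted_space =
  fixes D :: "'s set" and pi :: "'s \<Rightarrow> real" and le :: "'s \<Rightarrow> 's \<Rightarrow> bool"
  assumes finite_states: "finite D" and pi_pos: "s \<in> D \<Longrightarrow> pi s > 0"
begin

definition push :: "('s \<Rightarrow> 's \<Rightarrow> real) \<Rightarrow> ('s \<Rightarrow> real) \<Rightarrow> 's \<Rightarrow> real" where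
  "push K p t = (\<Sum>s\<in>D. p s * K s t)"

definition pull :: "('s \<Rightarrow> 's \<Rightarrow> real) \<Rightarrow> ('s \<Rightarrow> real) \<Rightarrow> 's \<Rightarrow> real" where
  "pull K g s = (\<Sum>t\<in>D. K s t * g t)"

definition expect :: "('s \<Rightarrow> real) \<Rightarrow> ('s \<Rightarrow> real) \<Rightarrow> real" where
  "expect p g = (\<Sum>s\<in>D. p s * g s)"

definition increasing :: "('s \<Rightarrow> real) \<Rightarrow> bool" where
  "increasing g \<longleftrightarrow> (\<forall>s\<in>D. \<forall>t\<in>D. le s t \<longrightarrow> g s \<le> g t)"

definition stoch_le :: "('s \<Rightarrow> real) \<Rightarrow> ('s \<Rightarrow> real) \<Rightarrow> bool" where
  "stoch_le p q \<longleftrightarrow> (\<forall>g. increasing g \<longrightarrow> expect p g \<le> expect q g)"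

definition monotone_kernel :: "('s \<Rightarrow> 's \<Rightarrow> real) \<Rightarrow> bool" where
  "monotone_kernel K \<longleftrightarrow> (\<forall>g. increasing g \<longrightarrow> increasing (pull K g))"

definition reversible :: "('s \<Rightarrow> 's \<Rightarrow> real) \<Rightarrow> bool" where
  "reversible K \<longleftrightarrow> (\<forall>s\<in>D. \<forall>t\<in>D. pi s * K s t = pi t * K t s)"

definition increasing_density :: "('s \<Rightarrow> real) \<Rightarrow> bool" where
  "increasing_density p \<longleftrightarrow> (\<exists>h. increasing h \<and> (\<forall>s\<in>D. p s = pi s * h s))"

definition equiv_rel :: "('s \<Rightarrow> 's \<Rightarrow> bool) \<Rightarrow> bool" where
  "equiv_rel E \<longleftrightarrow> (\<forall>s\<in>D. E s s) \<and> (\<forall>s\<in>D. \<forall>t\<in>D. E s t \<longrightarrow> E t s)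
     \<and> (\<forall>s\<in>D. \<forall>t\<in>D. \<forall>u\<in>D. E s t \<longrightarrow> E t u \<longrightarrow> E s u)"

definition class_mass :: "('s \<Rightarrow> 's \<Rightarrow> bool) \<Rightarrow> 's \<Rightarrow> real" where
  "class_mass E s = (\<Sum>u\<in>{u\<in>D. E s u}. pi u)"

definition heat_bath :: "('s \<Rightarrow> 's \<Rightarrow> bool) \<Rightarrow> 's \<Rightarrow> 's \<Rightarrow> real" where
  "heat_bath E s t = (if t \<in> D \<and> E s t then pi t / class_mass E s else 0)"

definition kernel_avg :: "'i set \<Rightarrow> ('i \<Rightarrow> 's \<Rightarrow> 's \<Rightarrow> real) \<Rightarrow> 's \<Rightarrow> 's \<Rightarrow> real" where
  "kernel_avg I Ks s t = (\<Sum>i\<in>I. Ks i s t) / real (card I)"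

lemma expect_push: "expect (push K p) g = expect p (pull K g)"
  unfolding expect_def push_def pull_def
  by (simp add: sum_distrib_left sum_distrib_right mult_ac) (rule sum.swap)

lemma stoch_le_refl: "stoch_le p p"
  by (simp add: stoch_le_def)

lemma stoch_le_trans: "stoch_le p q \<Longrightarrow> stoch_le q r \<Longrightarrow> stoch_le p r"
  unfolding stoch_le_def by (meson order_trans)

lemma stoch_le_push: "monotone_kernel K \<Longrightarrow> stoch_le p q \<Longrightarrow> stoch_le (push K p) (push K q)"
  unfolding stoch_le_def monotone_kernel_def by (simp add: expect_push)

lemma reversible_pull_adjoint:
  assumes "reversible K"
  shows "expect (\<lambda>s. pi s * h s) (pull K u) = expect (\<lambda>s. pi s * pull K h s) u"
proof -
  have "expect (\<lambda>s. pi s * h s) (pull K u) = (\<Sum>s\<in>D. \<Sum>t\<in>D. (pi s * K s t) * h s * u t)"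
    unfolding expect_def pull_def by (simp add: sum_distrib_left mult_ac)
  also have "\<dots> = (\<Sum>s\<in>D. \<Sum>t\<in>D. (pi t * K t s) * h s * u t)"
    using assms unfolding reversible_def by (intro sum.cong refl) auto
  also have "\<dots> = (\<Sum>t\<in>D. \<Sum>s\<in>D. (pi t * K t s) * h s * u t)"
    by (rule sum.swap)
  also have "\<dots> = expect (\<lambda>s. pi s * pull K h s) u"
    unfolding expect_def pull_def by (simp add: sum_distrib_left sum_distrib_right mult_ac)
  finally show ?thesis .
qed

lemma push_density:
  assumes "reversible K" "\<forall>s\<in>D. p s = pi s * h s" "t \<in> D"
  shows "push K p t = pi t * pull K h t"
proof -
  have "push K p t = (\<Sum>s\<in>D. pi s * K s t * h s)"
    unfolding push_def using assms(2) by (intro sum.cong refl) (simp add: mult_ac)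
  also have "\<dots> = (\<Sum>s\<in>D. pi t * K t s * h s)"
    using assms(1,3) unfolding reversible_def by (intro sum.cong refl) auto
  also have "\<dots> = pi t * pull K h t"
    unfolding pull_def by (simp add: sum_distrib_left mult_ac)
  finally show ?thesis .
qed

lemma increasing_density_push:
  "reversible K \<Longrightarrow> monotone_kernel K \<Longrightarrow> increasing_density p \<Longrightarrow> increasing_density (push K p)"
  unfolding increasing_density_def monotone_kernel_def by (metis push_density)

lemma increasing_density_point_mass:
  assumes "x \<in> D" "\<And>s. s \<in> D \<Longrightarrow> le x s \<Longrightarrow> s = x"
  shows "increasing_density (\<lambda>s. if s = x then 1 else 0)"
  unfolding increasing_density_def
proof (intro exI conjI)
  let ?h = "\<lambda>s. if s = x then 1 / pi x else 0"
  show "increasing ?h" unfolding increasing_def using assms pi_pos[OF assms(1)] by auto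
  show "\<forall>s\<in>D. (if s = x then 1 else 0) = pi s * ?h s" using pi_pos[OF assms(1)] by auto
qed

context
  fixes E :: "'s \<Rightarrow> 's \<Rightarrow> bool"
  assumes E: "equiv_rel E"
begin

lemma equiv_class_eq:
  assumes "s \<in> D" "t \<in> D" "E s t"
  shows "{u\<in>D. E s u} = {u\<in>D. E t u}"
  using E assms unfolding equiv_rel_def by blast

lemma heat_bath_class:
  assumes "s \<in> D" "t \<in> D" "E s t"
  shows "heat_bath E t = heat_bath E s"
proof
  fix u
  have "u \<in> D \<Longrightarrow> E t u = E s u" using equiv_class_eq[OF assms] by blast
  then show "heat_bath E t u = heat_bath E s u"
    using equiv_class_eq[OF assms] unfolding heat_bath_def class_mass_def by auto
qed

lemma class_mass_pos: "s \<in> D \<Longrightarrow> class_mass E s > 0"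
  unfolding class_mass_def using E finite_states pi_pos unfolding equiv_rel_def
  by (intro sum_pos2[where i=s]) (auto intro: less_imp_le)

lemma heat_bath_nonneg: "heat_bath E s t \<ge> 0"
proof -
  have "class_mass E s \<ge> 0"
    unfolding class_mass_def using pi_pos by (intro sum_nonneg) (auto intro: less_imp_le)
  then show ?thesis by (auto simp: heat_bath_def intro!: divide_nonneg_nonneg less_imp_le[OF pi_pos])
qed

lemma reversible_heat_bath: "reversible (heat_bath E)"
  unfolding reversible_def
proof (intro ballI)
  fix s t assume st: "s \<in> D" "t \<in> D"
  show "pi s * heat_bath E s t = pi t * heat_bath E t s"
  proof (cases "E s t")
    case True
    then have "E t s" using E st unfolding equiv_rel_def by blast
    then show ?thesis
      using True equiv_class_eq[OF st True] st unfolding heat_bath_def class_mass_def by simp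
  next
    case False
    then have "\<not> E t s" using E st unfolding equiv_rel_def by blast
    then show ?thesis using False unfolding heat_bath_def by simp
  qed
qed

lemma pull_heat_bath:
  "pull (heat_bath E) g s = (\<Sum>u\<in>{u\<in>D. E s u}. pi u * g u) / class_mass E s"
proof -
  have "pull (heat_bath E) g s = (\<Sum>t\<in>{u\<in>D. E s u}. pi t / class_mass E s * g t)"
    unfolding pull_def heat_bath_def using finite_states by (intro sum.mono_neutral_cong_right) auto
  then show ?thesis by (simp add: sum_divide_distrib[symmetric] mult_ac)
qed

lemma heat_bath_row_sum: "s \<in> D \<Longrightarrow> (\<Sum>t\<in>D. heat_bath E s t) = 1"
  using pull_heat_bath[of "\<lambda>_. 1" s] class_mass_pos[of s]
  by (simp add: pull_def class_mass_def)

lemma heat_bath_harris: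
  assumes chain: "\<And>s t. s \<in> D \<Longrightarrow> t \<in> D \<Longrightarrow> E s t \<Longrightarrow> le s t \<or> le t s"
    and h: "increasing h" and g: "increasing g"
  shows "expect (\<lambda>s. pi s * h s) (pull (heat_bath E) g) \<le> expect (\<lambda>s. pi s * h s) g"
proof -
  define k where "k s t = pi s * heat_bath E s t" for s t
  have k_sym: "k s t = k t s" if "s \<in> D" "t \<in> D" for s t
    using reversible_heat_bath that unfolding reversible_def k_def by auto
  have k_nonneg: "k s t \<ge> 0" if "s \<in> D" for s t
    unfolding k_def using pi_pos[OF that] heat_bath_nonneg by simp
  define Q where "Q = (\<Sum>s\<in>D. \<Sum>t\<in>D. k s t * h s * (g s - g t))"
  have Q_swap: "Q = (\<Sum>s\<in>D. \<Sum>t\<in>D. k s t * h t * (g t - g s))"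
    unfolding Q_def by (subst sum.swap) (use k_sym in \<open>auto intro!: sum.cong\<close>)
  have "2 * Q = (\<Sum>s\<in>D. \<Sum>t\<in>D. k s t * ((h s - h t) * (g s - g t)))"
    by (subst (1) mult_2, subst (2) Q_swap)
      (simp add: Q_def sum.distrib[symmetric] algebra_simps)
  also have "\<dots> \<ge> 0"
  proof (intro sum_nonneg)
    fix s t assume st: "s \<in> D" "t \<in> D"
    show "0 \<le> k s t * ((h s - h t) * (g s - g t))"
    proof (cases "E s t")
      case True
      then have "le s t \<or> le t s" using chain st by blast
      then have "(h s - h t) * (g s - g t) \<ge> 0"
        using h g st unfolding increasing_def
        by (metis diff_ge_0_iff_ge mult_nonneg_nonneg mult_nonpos_nonpos diff_le_0_iff_le)
      then show ?thesis using k_nonneg[OF st(1)] by simp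
    qed (simp add: k_def heat_bath_def)
  qed
  finally have "Q \<ge> 0" by simp
  moreover have "Q = expect (\<lambda>s. pi s * h s) g - expect (\<lambda>s. pi s * h s) (pull (heat_bath E) g)"
  proof -
    have "expect (\<lambda>s. pi s * h s) g = (\<Sum>s\<in>D. \<Sum>t\<in>D. k s t * h s * g s)"
      using heat_bath_row_sum
      by (simp add: expect_def k_def sum_distrib_left[symmetric] sum_distrib_right[symmetric] mult_ac)
    moreover have "expect (\<lambda>s. pi s * h s) (pull (heat_bath E) g) = (\<Sum>s\<in>D. \<Sum>t\<in>D. k s t * h s * g t)"
      unfolding expect_def pull_def k_def by (simp add: sum_distrib_left mult_ac)
    ultimately show ?thesis
      unfolding Q_def by (simp add: right_diff_distrib sum_subtractf)
  qed
  ultimately show ?thesis by simp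
qed

end

lemma pull_heat_bath_refine:
  assumes E: "equiv_rel E" and E': "equiv_rel E'"
    and finer: "\<And>s t. s \<in> D \<Longrightarrow> t \<in> D \<Longrightarrow> E' s t \<Longrightarrow> E s t" and s: "s \<in> D"
  shows "pull (heat_bath E') (pull (heat_bath E) g) s = pull (heat_bath E) g s"
proof -
  have "pull (heat_bath E') (pull (heat_bath E) g) s = (\<Sum>t\<in>D. heat_bath E' s t * pull (heat_bath E) g s)"
    unfolding pull_def[of "heat_bath E'"]
  proof (intro sum.cong refl)
    fix t assume t: "t \<in> D"
    show "heat_bath E' s t * pull (heat_bath E) g t = heat_bath E' s t * pull (heat_bath E) g s"
    proof (cases "E' s t")
      case True
      then show ?thesis using heat_bath_class[OF E s t] finer[OF s t] by (simp add: pull_def)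
    qed (simp add: heat_bath_def)
  qed
  then show ?thesis
    using heat_bath_row_sum[OF E' s] by (simp add: sum_distrib_right[symmetric])
qed

text \<open>The censoring inequality of Peres and Winkler, for a single update.\<close>
lemma censoring_inequality:
  assumes E: "equiv_rel E" and E': "equiv_rel E'"
    and finer: "\<And>s t. s \<in> D \<Longrightarrow> t \<in> D \<Longrightarrow> E' s t \<Longrightarrow> E s t"
    and chain: "\<And>s t. s \<in> D \<Longrightarrow> t \<in> D \<Longrightarrow> E s t \<Longrightarrow> le s t \<or> le t s"
    and mono: "monotone_kernel (heat_bath E')" and p: "increasing_density p"
  shows "stoch_le (push (heat_bath E) p) (push (heat_bath E') p)"
  unfolding stoch_le_def
proof (intro allI impI)
  fix g assume g: "increasing g"
  obtain h where h: "increasing h" "\<forall>s\<in>D. p s = pi s * h s"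
    using p unfolding increasing_density_def by blast
  have p_eq: "expect p u = expect (\<lambda>s. pi s * h s) u" for u
    unfolding expect_def using h(2) by simp
  have "expect (push (heat_bath E) p) g = expect (\<lambda>s. pi s * h s) (pull (heat_bath E) g)"
    by (simp add: expect_push p_eq)
  also have "\<dots> = expect (\<lambda>s. pi s * h s) (pull (heat_bath E') (pull (heat_bath E) g))"
    unfolding expect_def using pull_heat_bath_refine[OF E E' finer] by simp
  also have "\<dots> = expect (\<lambda>s. pi s * pull (heat_bath E') h s) (pull (heat_bath E) g)"
    by (rule reversible_pull_adjoint[OF reversible_heat_bath[OF E']])
  also have "\<dots> \<le> expect (\<lambda>s. pi s * pull (heat_bath E') h s) g"
    using mono h(1) g unfolding monotone_kernel_def by (intro heat_bath_harris[OF E chain]) auto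
  also have "\<dots> = expect (\<lambda>s. pi s * h s) (pull (heat_bath E') g)"
    by (rule reversible_pull_adjoint[OF reversible_heat_bath[OF E'], symmetric])
  also have "\<dots> = expect (push (heat_bath E') p) g"
    by (simp add: expect_push p_eq)
  finally show "expect (push (heat_bath E) p) g \<le> expect (push (heat_bath E') p) g" .
qed

lemma pull_kernel_avg: "pull (kernel_avg I Ks) g s = (\<Sum>i\<in>I. pull (Ks i) g s) / real (card I)"
  unfolding pull_def kernel_avg_def
  by (simp add: sum_distrib_right sum_divide_distrib[symmetric] sum.swap[of _ I D])

lemma push_kernel_avg: "push (kernel_avg I Ks) p t = (\<Sum>i\<in>I. push (Ks i) p t) / real (card I)"
  unfolding push_def kernel_avg_def
  by (simp add: sum_distrib_left sum_divide_distrib[symmetric] sum.swap[of _ I D])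

lemma expect_push_kernel_avg:
  "expect (push (kernel_avg I Ks) p) g = (\<Sum>i\<in>I. expect (push (Ks i) p) g) / real (card I)"
  unfolding expect_def push_kernel_avg
  by (simp add: sum_distrib_right sum_divide_distrib[symmetric] sum.swap[of _ I D])

lemma monotone_kernel_avg:
  "(\<And>i. i \<in> I \<Longrightarrow> monotone_kernel (Ks i)) \<Longrightarrow> monotone_kernel (kernel_avg I Ks)"
  unfolding monotone_kernel_def increasing_def pull_kernel_avg
  by (auto intro!: divide_right_mono sum_mono)

lemma reversible_kernel_avg:
  "(\<And>i. i \<in> I \<Longrightarrow> reversible (Ks i)) \<Longrightarrow> reversible (kernel_avg I Ks)"
  unfolding reversible_def kernel_avg_def by (auto simp: sum_distrib_left intro!: sum.cong)

lemma stoch_le_push_kernel_avg: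
  "(\<And>i. i \<in> I \<Longrightarrow> stoch_le (push (K i) p) (push (K' i) p)) \<Longrightarrow>
    stoch_le (push (kernel_avg I K) p) (push (kernel_avg I K') p)"
  unfolding stoch_le_def expect_push_kernel_avg by (auto intro!: divide_right_mono sum_mono)

text \<open>Above \<open>pi\<close> the event \<open>{h > 1}\<close> is increasing, so it witnesses the distance to \<open>pi\<close>
  of a measure with increasing density \<open>h\<close>.\<close>
lemma dist_le_of_stoch_le:
  assumes f: "increasing_density f" and fc: "stoch_le f c"
  shows "(\<Sum>s\<in>D. \<bar>f s - pi s\<bar>) \<le> (\<Sum>s\<in>D. \<bar>c s - pi s\<bar>)"
proof -
  obtain h where h: "increasing h" "\<forall>s\<in>D. f s = pi s * h s"
    using f unfolding increasing_density_def by blast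
  define g where "g s = (if h s > 1 then 1 else (0::real))" for s
  have "increasing g" using h(1) unfolding increasing_def g_def by fastforce
  then have g_le: "expect f g \<le> expect c g" using fc unfolding stoch_le_def by auto
  have "expect f (\<lambda>_. a) \<le> expect c (\<lambda>_. a)" for a
    using fc unfolding stoch_le_def increasing_def by auto
  from this[of 1] this[of "-1"] have mass: "(\<Sum>s\<in>D. f s) = (\<Sum>s\<in>D. c s)"
    unfolding expect_def by (simp add: sum_negf)
  have f_abs: "\<bar>f s - pi s\<bar> = 2 * (g s * (f s - pi s)) - (f s - pi s)" if "s \<in> D" for s
  proof -
    have "f s - pi s = pi s * (h s - 1)" using h(2) that by (simp add: algebra_simps)
    moreover have "pi s > 0" using pi_pos[OF that] .
    ultimately have "(f s - pi s > 0) = (h s > 1)" by (simp add: zero_less_mult_iff)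
    then show ?thesis unfolding g_def by auto
  qed
  have c_abs: "\<bar>c s - pi s\<bar> \<ge> 2 * (g s * (c s - pi s)) - (c s - pi s)" for s
    unfolding g_def by auto
  have "(\<Sum>s\<in>D. \<bar>f s - pi s\<bar>) = (\<Sum>s\<in>D. 2 * (g s * (f s - pi s)) - (f s - pi s))"
    using f_abs by simp
  also have "\<dots> = 2 * expect f g - 2 * expect pi g - (\<Sum>s\<in>D. f s) + (\<Sum>s\<in>D. pi s)"
    unfolding expect_def by (simp add: sum_subtractf sum_distrib_left algebra_simps sum.distrib)
  also have "\<dots> \<le> 2 * expect c g - 2 * expect pi g - (\<Sum>s\<in>D. c s) + (\<Sum>s\<in>D. pi s)"
    using g_le mass by simp
  also have "\<dots> = (\<Sum>s\<in>D. 2 * (g s * (c s - pi s)) - (c s - pi s))"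
    unfolding expect_def by (simp add: sum_subtractf sum_distrib_left algebra_simps sum.distrib)
  also have "\<dots> \<le> (\<Sum>s\<in>D. \<bar>c s - pi s\<bar>)"
    by (intro sum_mono c_abs)
  finally show ?thesis .
qed

end

section \<open>Markov chains on subsets of a finite set\<close>

definition sub_stochastic :: "'v set \<Rightarrow> ('v set \<Rightarrow> 'v set \<Rightarrow> real) \<Rightarrow> bool" where
  "sub_stochastic V P \<longleftrightarrow> (\<forall>X Y. P X Y \<ge> 0) \<and> (\<forall>X\<in>Pow V. (\<Sum>Y\<in>Pow V. P X Y) \<le> 1)"

definition stationary :: "'v set \<Rightarrow> ('v set \<Rightarrow> 'v set \<Rightarrow> real) \<Rightarrow> ('v set \<Rightarrow> real) \<Rightarrow> bool" where
  "stationary V P q \<longleftrightarrow> (\<forall>Y\<in>Pow V. step V P q Y = q Y)"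

lemma sub_stochasticI:
  assumes "\<And>X Y. P X Y \<ge> 0" "\<And>X. X \<subseteq> V \<Longrightarrow> (\<Sum>Y\<in>Pow V. P X Y) \<le> 1"
  shows "sub_stochastic V P"
  using assms unfolding sub_stochastic_def by auto

lemma sub_stochasticD:
  assumes "sub_stochastic V P"
  shows "P X Y \<ge> 0" and "X \<subseteq> V \<Longrightarrow> (\<Sum>Y\<in>Pow V. P X Y) \<le> 1"
  using assms unfolding sub_stochastic_def by auto

lemma sub_stochastic_mixture:
  assumes fin: "finite V" and P: "\<And>R. sub_stochastic V (P R)"
    and w: "\<And>X R. w X R \<ge> 0" "\<And>X. X \<subseteq> V \<Longrightarrow> (\<Sum>R\<in>Pow X. w X R) = 1"
  shows "sub_stochastic V (\<lambda>X Y. \<Sum>R\<in>Pow X. w X R * P R X Y)"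
proof (rule sub_stochasticI)
  show "(\<Sum>R\<in>Pow X. w X R * P R X Y) \<ge> 0" for X Y
    using w(1) sub_stochasticD(1)[OF P] by (intro sum_nonneg mult_nonneg_nonneg)
  fix X assume X: "X \<subseteq> V"
  have "(\<Sum>Y\<in>Pow V. \<Sum>R\<in>Pow X. w X R * P R X Y) = (\<Sum>R\<in>Pow X. w X R * (\<Sum>Y\<in>Pow V. P R X Y))"
    by (subst sum.swap) (simp add: sum_distrib_left)
  also have "\<dots> \<le> (\<Sum>R\<in>Pow X. w X R * 1)"
    using w(1) sub_stochasticD(2)[OF P X] by (intro sum_mono mult_left_mono) auto
  finally show "(\<Sum>Y\<in>Pow V. \<Sum>R\<in>Pow X. w X R * P R X Y) \<le> 1" using w(2)[OF X] by simp
qed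

lemma distr_at_0: "distr_at V P x0 0 = (\<lambda>Y. if Y = x0 then 1 else 0)"
  unfolding distr_at_def by simp

lemma distr_at_Suc: "distr_at V P x0 (Suc t) = step V P (distr_at V P x0 t)"
  unfolding distr_at_def by simp

lemma distr_at_add: "distr_at V P x0 (s + t) = (step V P ^^ t) (distr_at V P x0 s)"
  unfolding distr_at_def by (subst add.commute) (simp add: funpow_add)

lemma distr_at_nonneg: "sub_stochastic V P \<Longrightarrow> distr_at V P x0 t Y \<ge> 0"
proof (induction t arbitrary: Y)
  case (Suc t)
  then show ?case using sub_stochasticD(1)[OF Suc.prems]
    unfolding distr_at_Suc step_def by (auto intro!: sum_nonneg mult_nonneg_nonneg)
qed (simp add: distr_at_0)

lemma distr_at_mass_le_1:
  assumes fin: "finite V" and P: "sub_stochastic V P" and x0: "x0 \<subseteq> V"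
  shows "(\<Sum>Y\<in>Pow V. distr_at V P x0 t Y) \<le> 1"
proof (induction t)
  case 0 then show ?case using fin x0 by (simp add: distr_at_0)
next
  case (Suc t)
  let ?d = "distr_at V P x0 t"
  have "(\<Sum>Y\<in>Pow V. distr_at V P x0 (Suc t) Y) = (\<Sum>X\<in>Pow V. ?d X * (\<Sum>Y\<in>Pow V. P X Y))"
    unfolding distr_at_Suc step_def by (subst sum.swap) (simp add: sum_distrib_left)
  also have "\<dots> \<le> (\<Sum>X\<in>Pow V. ?d X * 1)"
    using distr_at_nonneg[OF P] sub_stochasticD(2)[OF P] by (intro sum_mono mult_left_mono) auto
  finally show ?case using Suc by simp
qed

lemma distr_at_support:
  assumes "x0 \<in> S" "\<And>X Y. X \<in> S \<Longrightarrow> P X Y \<noteq> 0 \<Longrightarrow> Y \<in> S"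
  shows "distr_at V P x0 t Y \<noteq> 0 \<Longrightarrow> Y \<in> S"
proof (induction t arbitrary: Y)
  case 0 then show ?case using assms(1) by (simp add: distr_at_0 split: if_splits)
next
  case (Suc t)
  then have "(\<Sum>X\<in>Pow V. distr_at V P x0 t X * P X Y) \<noteq> 0"
    by (simp add: distr_at_Suc step_def)
  then obtain X where "distr_at V P x0 t X * P X Y \<noteq> 0"
    by (rule sum.not_neutral_contains_not_neutral)
  then show ?case using Suc.IH assms(2) by auto
qed

lemma step_linear: "step V P (\<lambda>Y. \<Sum>i\<in>I. a i * f i Y) = (\<lambda>Y. \<Sum>i\<in>I. a i * step V P (f i) Y)"
proof
  fix Y
  have "step V P (\<lambda>Y. \<Sum>i\<in>I. a i * f i Y) Y = (\<Sum>X\<in>Pow V. \<Sum>i\<in>I. a i * (f i X * P X Y))"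
    unfolding step_def by (simp add: sum_distrib_right mult.assoc)
  also have "\<dots> = (\<Sum>i\<in>I. \<Sum>X\<in>Pow V. a i * (f i X * P X Y))" by (rule sum.swap)
  finally show "step V P (\<lambda>Y. \<Sum>i\<in>I. a i * f i Y) Y = (\<Sum>i\<in>I. a i * step V P (f i) Y)"
    by (simp add: step_def sum_distrib_left)
qed

lemma funpow_step_linear:
  "(step V P ^^ n) (\<lambda>Y. \<Sum>i\<in>I. a i * f i Y) = (\<lambda>Y. \<Sum>i\<in>I. a i * (step V P ^^ n) (f i) Y)"
  by (induction n) (simp_all add: step_linear)

lemma funpow_step_point_masses:
  "(step V P ^^ n) (\<lambda>Y. \<Sum>x\<in>I. a x * (if Y = x then 1 else 0)) = (\<lambda>Y. \<Sum>x\<in>I. a x * distr_at V P x n Y)"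
  unfolding funpow_step_linear distr_at_def ..

lemma dTV_commute: "dTV V p q = dTV V q p"
  unfolding dTV_def by (simp add: abs_minus_commute)

lemma dTV_nonneg: "dTV V p q \<ge> 0"
  unfolding dTV_def by (simp add: sum_nonneg)

lemma dTV_triangle: "dTV V p r \<le> dTV V p q + dTV V q r"
proof -
  have "(\<Sum>Y\<in>Pow V. \<bar>p Y - r Y\<bar>) \<le> (\<Sum>Y\<in>Pow V. \<bar>p Y - q Y\<bar> + \<bar>q Y - r Y\<bar>)"
    by (intro sum_mono) linarith
  then show ?thesis unfolding dTV_def by (simp add: sum.distrib add_divide_distrib[symmetric] divide_right_mono)
qed

lemma dTV_point_masses:
  assumes "finite V" "x \<subseteq> V" "y \<subseteq> V" "x \<noteq> y"
  shows "dTV V (\<lambda>Y. if Y = x then 1 else 0) (\<lambda>Y. if Y = y then 1 else 0) = 1"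
proof -
  have "(\<Sum>Y\<in>Pow V. \<bar>(if Y = x then 1 else 0) - (if Y = y then 1 else 0)\<bar>)
      = (\<Sum>Y\<in>{x, y}. \<bar>(if Y = x then 1 else 0) - (if Y = y then 1 else (0::real))\<bar>)"
    by (rule sum.mono_neutral_right) (use assms in auto)
  also have "\<dots> = 2" using assms(4) by simp
  finally show ?thesis unfolding dTV_def by simp
qed

lemma sum_abs_kernel_le:
  fixes a :: "'a \<Rightarrow> real" and K :: "'a \<Rightarrow> 'b \<Rightarrow> real"
  assumes "finite A"
  shows "(\<Sum>y\<in>B. \<bar>\<Sum>x\<in>A. a x * K x y\<bar>) \<le> (\<Sum>x\<in>A. \<bar>a x\<bar> * (\<Sum>y\<in>B. \<bar>K x y\<bar>))"
proof -
  have "(\<Sum>y\<in>B. \<bar>\<Sum>x\<in>A. a x * K x y\<bar>) \<le> (\<Sum>y\<in>B. \<Sum>x\<in>A. \<bar>a x\<bar> * \<bar>K x y\<bar>)"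
    by (intro sum_mono order.trans[OF sum_abs]) (simp add: abs_mult)
  also have "\<dots> = (\<Sum>x\<in>A. \<bar>a x\<bar> * (\<Sum>y\<in>B. \<bar>K x y\<bar>))"
    by (subst sum.swap) (simp add: sum_distrib_left)
  finally show ?thesis .
qed

lemma dTV_step_le:
  assumes "finite V" "sub_stochastic V P"
  shows "dTV V (step V P p) (step V P q) \<le> dTV V p q"
proof -
  have "(\<Sum>Y\<in>Pow V. \<bar>step V P p Y - step V P q Y\<bar>) = (\<Sum>Y\<in>Pow V. \<bar>\<Sum>X\<in>Pow V. (p X - q X) * P X Y\<bar>)"
    unfolding step_def by (simp add: left_diff_distrib sum_subtractf)
  also have "\<dots> \<le> (\<Sum>X\<in>Pow V. \<bar>p X - q X\<bar> * (\<Sum>Y\<in>Pow V. \<bar>P X Y\<bar>))"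
    using assms(1) by (intro sum_abs_kernel_le) auto
  also have "\<dots> \<le> (\<Sum>X\<in>Pow V. \<bar>p X - q X\<bar> * 1)"
    using sub_stochasticD[OF assms(2)] by (intro sum_mono mult_left_mono) auto
  finally show ?thesis unfolding dTV_def by (simp add: divide_right_mono)
qed

lemma dTV_step_step_le:
  assumes "finite V" "sub_stochastic V Q" "\<And>X. p X \<ge> 0"
  shows "dTV V (step V P p) (step V Q q) \<le> (\<Sum>X\<in>Pow V. p X * dTV V (P X) (Q X)) + dTV V p q"
proof -
  have "dTV V (step V P p) (step V Q p) \<le> (\<Sum>X\<in>Pow V. p X * dTV V (P X) (Q X))"
  proof -
    have "(\<Sum>Y\<in>Pow V. \<bar>step V P p Y - step V Q p Y\<bar>)
        = (\<Sum>Y\<in>Pow V. \<bar>\<Sum>X\<in>Pow V. p X * (P X Y - Q X Y)\<bar>)"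
      unfolding step_def by (simp add: right_diff_distrib sum_subtractf)
    also have "\<dots> \<le> (\<Sum>X\<in>Pow V. \<bar>p X\<bar> * (\<Sum>Y\<in>Pow V. \<bar>P X Y - Q X Y\<bar>))"
      using assms(1) by (intro sum_abs_kernel_le) auto
    also have "\<dots> = (\<Sum>X\<in>Pow V. p X * (\<Sum>Y\<in>Pow V. \<bar>P X Y - Q X Y\<bar>))"
      using assms(3) by simp
    finally show ?thesis
      unfolding dTV_def by (simp add: sum_divide_distrib[symmetric] divide_right_mono)
  qed
  then show ?thesis
    using dTV_triangle[of V "step V P p" "step V Q q" "step V Q p"]
      dTV_step_le[OF assms(1,2), of p q]
    by linarith
qed

lemma dTV_distr_at_le:
  assumes fin: "finite V" and P: "sub_stochastic V P" and Q: "sub_stochastic V Q" and x0: "x0 \<subseteq> V"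
    and close: "\<And>X. X \<in> S \<Longrightarrow> dTV V (P X) (Q X) \<le> \<delta>"
    and support: "\<And>t X. distr_at V P x0 t X \<noteq> 0 \<Longrightarrow> X \<in> S"
  shows "dTV V (distr_at V P x0 t) (distr_at V Q x0 t) \<le> t * \<delta>"
proof (induction t)
  case 0 then show ?case by (simp add: dTV_def distr_at_0)
next
  case (Suc t)
  let ?p = "distr_at V P x0 t"
  have "x0 \<in> S" using support[of 0 x0] by (simp add: distr_at_0)
  then have "\<delta> \<ge> 0" using close dTV_nonneg order_trans by blast
  have "?p X * dTV V (P X) (Q X) \<le> ?p X * \<delta>" for X
  proof (cases "?p X = 0")
    case False
    then show ?thesis using close support distr_at_nonneg[OF P] by (simp add: mult_left_mono)
  qed simp
  then have "(\<Sum>X\<in>Pow V. ?p X * dTV V (P X) (Q X)) \<le> (\<Sum>X\<in>Pow V. ?p X * \<delta>)"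
    by (intro sum_mono)
  also have "\<dots> \<le> \<delta>"
    using distr_at_mass_le_1[OF fin P x0] \<open>\<delta> \<ge> 0\<close>
    by (simp add: sum_distrib_right[symmetric] mult_left_le_one_le sum_nonneg distr_at_nonneg[OF P])
  moreover have "dTV V (step V P ?p) (step V Q (distr_at V Q x0 t))
      \<le> (\<Sum>X\<in>Pow V. ?p X * dTV V (P X) (Q X)) + dTV V ?p (distr_at V Q x0 t)"
    by (rule dTV_step_step_le[OF fin Q distr_at_nonneg[OF P]])
  ultimately show ?case using Suc unfolding distr_at_Suc by (simp add: algebra_simps)
qed

lemma dTV_distr_at_antimono:
  assumes "finite V" "sub_stochastic V P" "stationary V P q" "t \<le> t'"
  shows "dTV V (distr_at V P x0 t') q \<le> dTV V (distr_at V P x0 t) q"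
  using assms(4)
proof (induction t' rule: dec_induct)
  case (step n)
  have "\<forall>Y\<in>Pow V. step V P q Y = q Y" using assms(3) unfolding stationary_def .
  then have "dTV V (distr_at V P x0 (Suc n)) q = dTV V (step V P (distr_at V P x0 n)) (step V P q)"
    unfolding distr_at_Suc dTV_def by (intro arg_cong[where f="\<lambda>x. x / 2"] sum.cong) auto
  then show ?case using dTV_step_le[OF assms(1,2)] step.IH by (metis order_trans)
qed simp

lemma dTV_le_of_mix_from_le:
  assumes "finite V" "sub_stochastic V P" "stationary V P q" "mix_from V P q x0 eps \<le> enat t"
  shows "dTV V (distr_at V P x0 t) q \<le> eps"
proof -
  have ex: "\<exists>t. dTV V (distr_at V P x0 t) q \<le> eps"
    using assms(4) unfolding mix_from_def by (auto split: if_splits)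
  define t0 where "t0 = (LEAST t. dTV V (distr_at V P x0 t) q \<le> eps)"
  have "dTV V (distr_at V P x0 t0) q \<le> eps" unfolding t0_def using ex by (rule LeastI_ex)
  moreover have "t0 \<le> t" using assms(4) ex unfolding mix_from_def t0_def by simp
  ultimately show ?thesis using dTV_distr_at_antimono[OF assms(1-3)] by (metis order_trans)
qed

lemma mix_from_le_of_dTV_le:
  assumes "dTV V (distr_at V P x0 t) q \<le> eps"
  shows "mix_from V P q x0 eps \<le> enat t"
  using assms Least_le[of "\<lambda>t. dTV V (distr_at V P x0 t) q \<le> eps" t]
  unfolding mix_from_def by auto

lemma T_GD_from_eq_0:
  assumes "dTV V (\<lambda>Y. if Y = x0 then 1 else 0) nu \<le> eps"
  shows "T_GD_from V nu x0 eps = 0"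
proof -
  have "T_GD_from V nu x0 eps \<le> enat 0"
    unfolding T_GD_from_def using assms by (intro mix_from_le_of_dTV_le) (simp add: distr_at_0)
  then show ?thesis by (simp add: zero_enat_def[symmetric])
qed

definition site_update :: "'v set \<Rightarrow> ('v set \<Rightarrow> real) \<Rightarrow> 'v \<Rightarrow> 'v set \<Rightarrow> 'v set \<Rightarrow> real" where
  "site_update V nu v X Y =
     (if Y \<subseteq> V \<and> Y - {v} = X - {v} then cond V nu (V - {v}) (X - {v}) Y else 0)"

lemma glauber_eq_site_update_avg:
  "glauber V nu X Y = (\<Sum>v\<in>V. site_update V nu v X Y) / real (card V)"
  unfolding glauber_def site_update_def ..

lemma cond_nonneg: "(\<And>Y. nu Y \<ge> 0) \<Longrightarrow> cond V nu S sg Y \<ge> 0"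
  unfolding cond_def pin_mass_def by (auto intro!: divide_nonneg_nonneg sum_nonneg)

lemma cond_mass:
  assumes "finite V"
  shows "(\<Sum>Y\<in>Pow V. cond V nu S sg Y) = pin_mass V nu S sg / pin_mass V nu S sg"
proof -
  have "(\<Sum>Y\<in>Pow V. cond V nu S sg Y) = (\<Sum>Y\<in>Pow V. if Y \<inter> S = sg then nu Y / pin_mass V nu S sg else 0)"
    unfolding cond_def by (intro sum.cong refl) auto
  also have "\<dots> = (\<Sum>Y\<in>{Y\<in>Pow V. Y \<inter> S = sg}. nu Y / pin_mass V nu S sg)"
    by (simp only: sum.inter_filter[OF finite_Pow_iff[THEN iffD2, OF assms]])
  finally show ?thesis unfolding pin_mass_def by (simp add: sum_divide_distrib[symmetric])
qed

lemma cond_mass_le_1: "finite V \<Longrightarrow> (\<Sum>Y\<in>Pow V. cond V nu S sg Y) \<le> 1"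
  by (simp add: cond_mass)

lemma cond_mass_eq_1: "finite V \<Longrightarrow> pin_mass V nu S sg > 0 \<Longrightarrow> (\<Sum>Y\<in>Pow V. cond V nu S sg Y) = 1"
  by (simp add: cond_mass)

lemma site_class:
  assumes "v \<in> V" "X \<subseteq> V"
  shows "{Y \<in> Pow V. Y - {v} = X - {v}} = {X - {v}, insert v X}"
proof (intro set_eqI iffI)
  fix Y assume "Y \<in> {Y \<in> Pow V. Y - {v} = X - {v}}"
  then have "Y - {v} = X - {v}" by auto
  then show "Y \<in> {X - {v}, insert v X}" by (cases "v \<in> Y") auto
qed (use assms in auto)

lemma pin_mass_site:
  assumes "v \<in> V" "X \<subseteq> V"
  shows "pin_mass V nu (V - {v}) (X - {v}) = nu (X - {v}) + nu (insert v X)"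
proof -
  have eq: "{Y \<in> Pow V. Y \<inter> (V - {v}) = X - {v}} = {Y \<in> Pow V. Y - {v} = X - {v}}"
    by auto
  show ?thesis unfolding pin_mass_def eq site_class[OF assms] by (subst sum.insert) auto
qed

lemma site_update_eq:
  assumes "v \<in> V" "X \<subseteq> V" "Y \<subseteq> V" "Y - {v} = X - {v}"
  shows "site_update V nu v X Y = nu Y / (nu (X - {v}) + nu (insert v X))"
proof -
  have "Y \<inter> (V - {v}) = X - {v}" using assms by auto
  then show ?thesis unfolding site_update_def cond_def pin_mass_site[OF assms(1,2)] using assms by simp
qed

lemma marg1_cond_site:
  assumes "finite V" "v \<in> V" "Z \<subseteq> V"
  shows "marg1 V (cond V nu (V - {v}) (Z - {v})) v = site_update V nu v Z (insert v Z)"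
proof -
  have "marg1 V (cond V nu (V - {v}) (Z - {v})) v = (\<Sum>Y\<in>{insert v Z}. cond V nu (V - {v}) (Z - {v}) Y)"
    unfolding marg1_def
  proof (rule sum.mono_neutral_cong_right)
    show "\<forall>Y\<in>{Y \<in> Pow V. v \<in> Y} - {insert v Z}. cond V nu (V - {v}) (Z - {v}) Y = 0"
    proof
      fix Y assume Y: "Y \<in> {Y \<in> Pow V. v \<in> Y} - {insert v Z}"
      have "Y \<inter> (V - {v}) \<noteq> Z - {v}"
      proof
        assume "Y \<inter> (V - {v}) = Z - {v}"
        moreover have "v \<in> Y" "Y \<subseteq> V" "Y \<noteq> insert v Z" using Y by auto
        ultimately show False by blast
      qed
      then show "cond V nu (V - {v}) (Z - {v}) Y = 0" by (simp add: cond_def)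
    qed
    show "{insert v Z} \<subseteq> {Y \<in> Pow V. v \<in> Y}" using assms by simp
  qed (use assms(1) in simp_all)
  then show ?thesis using assms by (simp add: site_update_def)
qed

lemma sum_site_class:
  assumes "finite V" "v \<in> V" "X \<subseteq> V"
  shows "(\<Sum>Y\<in>Pow V. if Y \<subseteq> V \<and> Y - {v} = X - {v} then g Y else 0) = g (X - {v}) + g (insert v X)"
proof -
  have "(\<Sum>Y\<in>Pow V. if Y \<subseteq> V \<and> Y - {v} = X - {v} then g Y else 0)
      = (\<Sum>Y\<in>Pow V. if Y - {v} = X - {v} then g Y else 0)"
    by (intro sum.cong) auto
  also have "\<dots> = (\<Sum>Y\<in>{Y \<in> Pow V. Y - {v} = X - {v}}. g Y)"
    by (simp only: sum.inter_filter[OF finite_Pow_iff[THEN iffD2, OF assms(1)]])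
  also have "\<dots> = g (X - {v}) + g (insert v X)"
    unfolding site_class[OF assms(2,3)] by (subst sum.insert) auto
  finally show ?thesis .
qed

lemma sub_stochastic_glauber:
  assumes fin: "finite V" and nn: "\<And>Y. nu Y \<ge> 0"
  shows "sub_stochastic V (glauber V nu)"
proof (rule sub_stochasticI)
  show "glauber V nu X Y \<ge> 0" for X Y
    unfolding glauber_def using cond_nonneg[of nu, OF nn] by (auto intro!: divide_nonneg_nonneg sum_nonneg)
  fix X assume X: "X \<subseteq> V"
  have site: "(\<Sum>Y\<in>Pow V. site_update V nu v X Y) \<le> 1" for v
  proof -
    have "(\<Sum>Y\<in>Pow V. site_update V nu v X Y) \<le> (\<Sum>Y\<in>Pow V. cond V nu (V - {v}) (X - {v}) Y)"
      by (intro sum_mono) (auto simp: site_update_def intro: cond_nonneg nn)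
    also have "\<dots> \<le> 1" by (rule cond_mass_le_1[OF fin])
    finally show ?thesis .
  qed
  have "(\<Sum>Y\<in>Pow V. glauber V nu X Y) = (\<Sum>v\<in>V. \<Sum>Y\<in>Pow V. site_update V nu v X Y) / real (card V)"
    unfolding glauber_eq_site_update_avg by (subst sum.swap) (simp add: sum_divide_distrib)
  also have "\<dots> \<le> (\<Sum>v\<in>V. 1) / real (card V)"
    using site by (intro divide_right_mono sum_mono) auto
  finally show "(\<Sum>Y\<in>Pow V. glauber V nu X Y) \<le> 1" by (simp split: if_splits)
qed

lemma site_update_stationary:
  assumes fin: "finite V" and nn: "\<And>Y. nu Y \<ge> 0" and v: "v \<in> V" and Y: "Y \<subseteq> V"
  shows "(\<Sum>X\<in>Pow V. nu X * site_update V nu v X Y) = nu Y"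
proof -
  define M where "M = nu (Y - {v}) + nu (insert v Y)"
  have "(\<Sum>X\<in>Pow V. nu X * site_update V nu v X Y)
      = (\<Sum>X\<in>Pow V. if X \<subseteq> V \<and> X - {v} = Y - {v} then nu X * (nu Y / M) else 0)"
  proof (intro sum.cong refl)
    fix X assume X: "X \<in> Pow V"
    have "X - {v} = Y - {v} \<Longrightarrow> insert v X = insert v Y" by blast
    then show "nu X * site_update V nu v X Y =
        (if X \<subseteq> V \<and> X - {v} = Y - {v} then nu X * (nu Y / M) else 0)"
      using site_update_eq[OF v _ Y] X unfolding M_def by (auto simp: site_update_def)
  qed
  also have "\<dots> = M * (nu Y / M)"
    unfolding sum_site_class[OF fin v Y] by (simp only: M_def distrib_right)
  also have "\<dots> = nu Y"
  proof (cases "M = 0")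
    case True
    have "nu Y \<le> M" unfolding M_def using nn[of "Y - {v}"] nn[of "insert v Y"]
      by (cases "v \<in> Y") (auto simp: insert_absorb)
    then show ?thesis using True nn[of Y] by simp
  qed simp
  finally show ?thesis .
qed

lemma stationary_glauber:
  assumes fin: "finite V" and ne: "V \<noteq> {}" and nn: "\<And>Y. nu Y \<ge> 0"
  shows "stationary V (glauber V nu) nu"
  unfolding stationary_def
proof
  fix Y assume "Y \<in> Pow V"
  then have "(\<Sum>X\<in>Pow V. nu X * site_update V nu v X Y) = nu Y" if "v \<in> V" for v
    using site_update_stationary[OF fin nn that] by simp
  moreover have "step V (glauber V nu) nu Y
      = (\<Sum>v\<in>V. \<Sum>X\<in>Pow V. nu X * site_update V nu v X Y) / real (card V)"
    unfolding step_def glauber_eq_site_update_avg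
    by (simp add: sum_distrib_left sum_divide_distrib[symmetric]) (rule disjI2, rule sum.swap)
  moreover have "real (card V) > 0" using fin ne by (simp add: card_gt_0_iff)
  ultimately show "step V (glauber V nu) nu Y = nu Y" by simp
qed

lemma glauber_support:
  assumes "\<And>Y. nu Y \<ge> 0" "glauber V nu X Y \<noteq> 0"
  shows "Y \<in> support V nu"
proof -
  have "(\<Sum>v\<in>V. site_update V nu v X Y) \<noteq> 0"
    using assms(2) by (auto simp: glauber_eq_site_update_avg)
  then obtain v where "site_update V nu v X Y \<noteq> 0"
    by (rule sum.not_neutral_contains_not_neutral)
  then have "Y \<subseteq> V" "nu Y \<noteq> 0" unfolding site_update_def cond_def by (auto split: if_splits)
  then show ?thesis using assms(1)[of Y] by (simp add: support_def)
qed

section \<open>The joint chain on configurations and pinnings\<close>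

locale field_coupling =
  fixes V :: "'v set" and mu :: "'v set \<Rightarrow> real" and theta :: real
  assumes finite_V: "finite V" and dist: "is_dist V mu" and monotone: "monotone_system V mu"
    and mu_V_pos: "mu V > 0" and theta_pos: "0 < theta" and theta_lt_1: "theta < 1"
    and V_nonempty: "V \<noteq> {}"
begin

abbreviation \<Omega> :: "'v set set" where
  "\<Omega> \<equiv> support V mu"

text \<open>In a pair \<open>(X, R)\<close>, \<open>R \<subseteq> X\<close> is the set \<open>V - S\<close> of vertices that a step of the field
  dynamics started at \<open>X\<close> keeps pinned to 1; it has law \<open>pin_prob X\<close>.\<close>
definition pin_prob :: "'v set \<Rightarrow> 'v set \<Rightarrow> real" where
  "pin_prob X R = (1 - theta) ^ card R * theta ^ card (X - R)"

definition pairs :: "('v set \<times> 'v set) set" where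
  "pairs = Sigma \<Omega> Pow"

definition joint :: "'v set \<times> 'v set \<Rightarrow> real" where
  "joint s = (if snd s \<subseteq> fst s then mu (fst s) * pin_prob (fst s) (snd s) else 0)"

definition pair_le :: "'v set \<times> 'v set \<Rightarrow> 'v set \<times> 'v set \<Rightarrow> bool" where
  "pair_le s t \<longleftrightarrow> fst s \<subseteq> fst t \<and> snd s \<subseteq> snd t"

lemma mu_nonneg: "mu X \<ge> 0"
  using dist unfolding is_dist_def by auto

lemma mem_support: "X \<in> \<Omega> \<longleftrightarrow> X \<subseteq> V \<and> mu X > 0"
  unfolding support_def by auto

lemma mu_eq_0_off_support: "X \<notin> \<Omega> \<Longrightarrow> mu X = 0"
  using dist mu_nonneg[of X] unfolding is_dist_def by (fastforce simp: mem_support)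

lemma finite_support: "finite \<Omega>"
  unfolding support_def using finite_V by simp

lemma finite_of_support: "X \<in> \<Omega> \<Longrightarrow> finite X"
  using finite_V finite_subset mem_support by blast

lemma mem_pairs: "(X, R) \<in> pairs \<longleftrightarrow> X \<in> \<Omega> \<and> R \<subseteq> X"
  unfolding pairs_def by auto

lemma mem_pairs_iff: "(X, R) \<in> pairs \<longleftrightarrow> X \<subseteq> V \<and> mu X > 0 \<and> R \<subseteq> X"
  by (auto simp: mem_pairs mem_support)

lemma finite_pairs: "finite pairs"
  unfolding pairs_def using finite_support finite_of_support by auto

lemma sum_pairs: "(\<Sum>s\<in>pairs. f s) = (\<Sum>X\<in>\<Omega>. \<Sum>R\<in>Pow X. f (X, R))"
  unfolding pairs_def using finite_support finite_of_support by (subst sum.Sigma) auto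

lemma pin_prob_pos: "pin_prob X R > 0"
  unfolding pin_prob_def using theta_pos theta_lt_1 by simp

lemma pin_prob_sum: "finite X \<Longrightarrow> (\<Sum>R\<in>Pow X. pin_prob X R) = 1"
  using prod_add[of X "\<lambda>_. 1 - theta" "\<lambda>_. theta"] by (simp add: pin_prob_def)

lemma pin_prob_split:
  assumes "finite Y" "X \<subseteq> Y" "R \<subseteq> X" "T \<subseteq> Y - X"
  shows "pin_prob Y (R \<union> T) = pin_prob X R * pin_prob (Y - X) T"
proof -
  have fX: "finite X" using finite_subset[OF assms(2,1)] .
  have fR: "finite R" using finite_subset[OF assms(3) fX] .
  have fT: "finite T" using finite_subset[OF assms(4)] assms(1) by simp
  have "card (R \<union> T) = card R + card T" using fR fT assms by (intro card_Un_disjoint) auto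
  moreover have "Y - (R \<union> T) = (X - R) \<union> ((Y - X) - T)" using assms by auto
  moreover have "card ((X - R) \<union> ((Y - X) - T)) = card (X - R) + card ((Y - X) - T)"
    using assms fX by (intro card_Un_disjoint) auto
  ultimately show ?thesis unfolding pin_prob_def by (simp add: power_add mult_ac)
qed

lemma pin_prob_insert_free: "finite X \<Longrightarrow> v \<notin> R \<Longrightarrow> pin_prob (insert v X) R = theta * pin_prob (X - {v}) R"
proof -
  assume "finite X" "v \<notin> R"
  then have "insert v X - R = insert v (X - {v} - R)" "v \<notin> X - {v} - R" "finite (X - {v} - R)" by auto
  then show ?thesis unfolding pin_prob_def by simp
qed

lemma pin_prob_insert_pinned:
  "finite X \<Longrightarrow> R \<subseteq> X \<Longrightarrow> pin_prob (insert v X) (insert v R) = (1 - theta) * pin_prob (X - {v}) (R - {v})"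
proof -
  assume "finite X" "R \<subseteq> X"
  then have "finite R" using finite_subset by blast
  then have "card (insert v R) = Suc (card (R - {v}))" by (rule card.insert_remove)
  moreover have "insert v X - insert v R = X - {v} - (R - {v})" by auto
  ultimately show ?thesis unfolding pin_prob_def by simp
qed

lemma joint_pos: "s \<in> pairs \<Longrightarrow> joint s > 0"
  unfolding pairs_def joint_def using pin_prob_pos by (auto simp: mem_support)

lemma joint_nonneg: "joint s \<ge> 0"
  unfolding joint_def using pin_prob_pos mu_nonneg by (simp add: less_imp_le)

lemma joint_eq_0:
  assumes "fst s \<subseteq> V" "s \<notin> pairs"
  shows "joint s = 0"
proof (cases "snd s \<subseteq> fst s")
  case True
  then have "\<not> mu (fst s) > 0" using assms by (cases s) (auto simp: mem_pairs mem_support)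
  then have "mu (fst s) = 0" using mu_nonneg[of "fst s"] by linarith
  then show ?thesis by (simp add: joint_def)
qed (simp add: joint_def)

lemma joint_site:
  assumes "(X, R) \<in> pairs"
  shows "joint (X - {v}, R - {v}) = mu (X - {v}) * pin_prob (X - {v}) (R - {v})"
    and "joint (insert v X, R - {v}) = mu (insert v X) * (theta * pin_prob (X - {v}) (R - {v}))"
    and "joint (insert v X, insert v R) = mu (insert v X) * ((1 - theta) * pin_prob (X - {v}) (R - {v}))"
  using assms pin_prob_insert_free[of X v "R - {v}"] pin_prob_insert_pinned[of X R v]
  by (auto simp: joint_def mem_pairs finite_of_support)

sublocale J: ordered_weighted_space pairs joint pair_le
  by unfold_locales (use finite_pairs joint_pos in auto)

lemma site_mass_pos:
  assumes "X \<in> \<Omega>"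
  shows "mu (X - {v}) + mu (insert v X) > 0"
proof (cases "v \<in> X")
  case True
  then have "insert v X = X" by auto
  then show ?thesis using assms mu_nonneg[of "X - {v}"] by (simp add: mem_support)
next
  case False
  then have "X - {v} = X" by auto
  then show ?thesis using assms mu_nonneg[of "insert v X"] by (simp add: mem_support)
qed

text \<open>This is the only use of the monotone-system hypothesis.\<close>
lemma mu_cross:
  assumes X: "X \<in> \<Omega>" and Y: "Y \<in> \<Omega>" and XY: "X \<subseteq> Y" and v: "v \<in> V"
  shows "mu (insert v X) * mu (Y - {v}) \<le> mu (X - {v}) * mu (insert v Y)"
proof -
  have XV: "X \<subseteq> V" and YV: "Y \<subseteq> V" using X Y by (auto simp: mem_support)
  have pos: "mu (X - {v}) + mu (insert v X) > 0" "mu (Y - {v}) + mu (insert v Y) > 0"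
    using site_mass_pos[OF X] site_mass_pos[OF Y] by auto
  have marg: "marg1 V (cond V mu (V - {v}) (Z - {v})) v = mu (insert v Z) / (mu (Z - {v}) + mu (insert v Z))"
    if "Z \<subseteq> V" for Z
    using marg1_cond_site[OF finite_V v that] site_update_eq[OF v that, of "insert v Z" mu] v that
    by simp
  have feasible: "feasible V mu (V - {v}) (Z - {v})"
    if "Z \<subseteq> V" "mu (Z - {v}) + mu (insert v Z) > 0" for Z
  proof -
    have "pin_mass V mu (V - {v}) (Z - {v}) > 0" using pin_mass_site[OF v that(1)] that(2) by simp
    then show ?thesis unfolding feasible_def using that(1) by blast
  qed
  have "X - {v} \<subseteq> Y - {v}" using XY by auto
  then have "marg1 V (cond V mu (V - {v}) (X - {v})) v \<le> marg1 V (cond V mu (V - {v}) (Y - {v})) v"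
    using monotone[unfolded monotone_system_def, rule_format, OF v, of "X - {v}" "Y - {v}"]
      feasible[OF XV pos(1)] feasible[OF YV pos(2)] by blast
  then have "mu (insert v X) / (mu (X - {v}) + mu (insert v X))
      \<le> mu (insert v Y) / (mu (Y - {v}) + mu (insert v Y))"
    using marg[OF XV] marg[OF YV] by simp
  then have "mu (insert v X) * (mu (Y - {v}) + mu (insert v Y))
      \<le> mu (insert v Y) * (mu (X - {v}) + mu (insert v X))"
    using pos by (simp add: divide_simps)
  then show ?thesis by (simp add: algebra_simps)
qed

definition same_config :: "'v set \<times> 'v set \<Rightarrow> 'v set \<times> 'v set \<Rightarrow> bool" where
  "same_config s t \<longleftrightarrow> fst s = fst t"

definition censored_rel :: "'v \<Rightarrow> 'v set \<times> 'v set \<Rightarrow> 'v set \<times> 'v set \<Rightarrow> bool" where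
  "censored_rel v s t \<longleftrightarrow> snd s = snd t \<and> fst s - {v} = fst t - {v}"

definition block_rel :: "'v \<Rightarrow> 'v set \<times> 'v set \<Rightarrow> 'v set \<times> 'v set \<Rightarrow> bool" where
  "block_rel v s t \<longleftrightarrow> fst s - {v} = fst t - {v} \<and> snd s - {v} = snd t - {v}"

definition refresh :: "'v set \<times> 'v set \<Rightarrow> 'v set \<times> 'v set \<Rightarrow> real" where
  "refresh = J.heat_bath same_config"

definition block_update :: "'v \<Rightarrow> 'v set \<times> 'v set \<Rightarrow> 'v set \<times> 'v set \<Rightarrow> real" where
  "block_update v = J.heat_bath (block_rel v)"

definition censored_update :: "'v \<Rightarrow> 'v set \<times> 'v set \<Rightarrow> 'v set \<times> 'v set \<Rightarrow> real" where
  "censored_update v = J.heat_bath (censored_rel v)"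

lemma equiv_same_config: "J.equiv_rel same_config"
  unfolding J.equiv_rel_def same_config_def by auto

lemma equiv_censored_rel: "J.equiv_rel (censored_rel v)"
  unfolding J.equiv_rel_def censored_rel_def by auto

lemma equiv_block_rel: "J.equiv_rel (block_rel v)"
  unfolding J.equiv_rel_def block_rel_def by auto

lemma censored_rel_imp_block_rel: "censored_rel v s t \<Longrightarrow> block_rel v s t"
  unfolding censored_rel_def block_rel_def by auto

lemma same_config_class:
  "u \<in> pairs \<Longrightarrow> same_config (X, R) u \<longleftrightarrow> u \<in> (\<lambda>R'. (X, R')) ` Pow X"
  unfolding same_config_def by (cases u) (auto simp: mem_pairs)

lemma censored_class:
  "censored_rel v (X, R) u \<longleftrightarrow> u \<in> {(X - {v}, R), (insert v X, R)}"
proof -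
  have "A - {v} = X - {v} \<longleftrightarrow> A \<in> {X - {v}, insert v X}" for A by blast
  then show ?thesis unfolding censored_rel_def by (cases u) auto
qed

lemma block_class:
  assumes "u \<in> pairs"
  shows "block_rel v (X, R) u \<longleftrightarrow> u \<in> {(X - {v}, R - {v}), (insert v X, R - {v}), (insert v X, insert v R)}"
proof -
  obtain X' R' where u: "u = (X', R')" by (cases u)
  have "R' \<subseteq> X'" using assms u by (simp add: mem_pairs)
  have site: "A - {v} = B - {v} \<longleftrightarrow> A \<in> {B - {v}, insert v B}" for A B :: "'v set" by blast
  show ?thesis
  proof (cases "v \<in> X'")
    case False
    then have "v \<notin> R'" using \<open>R' \<subseteq> X'\<close> by blast
    then show ?thesis using False unfolding u block_rel_def site by auto
  qed (auto simp: u block_rel_def site)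
qed

lemma block_rel_chain:
  assumes "s \<in> pairs" "t \<in> pairs" "block_rel v s t"
  shows "pair_le s t \<or> pair_le t s"
proof -
  obtain X R where s: "s = (X, R)" by (cases s)
  have "s \<in> {(X - {v}, R - {v}), (insert v X, R - {v}), (insert v X, insert v R)}"
    and "t \<in> {(X - {v}, R - {v}), (insert v X, R - {v}), (insert v X, insert v R)}"
    using block_class[of s v X R] block_class[of t v X R] assms
    by (auto simp: s block_rel_def)
  then show ?thesis by (auto simp: pair_le_def)
qed

text \<open>Since \<open>joint\<close> vanishes off \<open>pairs\<close>, class sums may run over any finite set of candidates.\<close>
lemma sum_class:
  assumes "finite C" "\<forall>u\<in>C. fst u \<subseteq> V" "\<And>u. u \<in> pairs \<Longrightarrow> E s u \<longleftrightarrow> u \<in> C"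
  shows "(\<Sum>u\<in>{u\<in>pairs. E s u}. joint u * F u) = (\<Sum>u\<in>C. joint u * F u)"
proof -
  have "{u\<in>pairs. E s u} = C \<inter> pairs" using assms(3) by auto
  moreover have "(\<Sum>u\<in>C \<inter> pairs. joint u * F u) = (\<Sum>u\<in>C. joint u * F u)"
    by (rule sum.mono_neutral_left) (use assms(1,2) joint_eq_0 in auto)
  ultimately show ?thesis by simp
qed

lemma pull_heat_bath_on:
  assumes "J.equiv_rel E" "finite C" "\<forall>u\<in>C. fst u \<subseteq> V" "\<And>u. u \<in> pairs \<Longrightarrow> E s u \<longleftrightarrow> u \<in> C"
  shows "J.pull (J.heat_bath E) g s = (\<Sum>u\<in>C. joint u * g u) / (\<Sum>u\<in>C. joint u)"
  using J.pull_heat_bath[OF assms(1)] sum_class[where E=E and s=s and C=C, OF assms(2-4), of g]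
    sum_class[where E=E and s=s and C=C, OF assms(2-4), of "\<lambda>_. 1"]
  by (simp add: J.class_mass_def)

lemma pull_refresh:
  assumes "(X, R) \<in> pairs"
  shows "J.pull refresh g (X, R) = (\<Sum>R'\<in>Pow X. pin_prob X R' * g (X, R'))"
proof -
  have X: "X \<in> \<Omega>" "finite X" using assms by (auto simp: mem_pairs finite_of_support)
  have inj: "inj_on (\<lambda>R'. (X, R')) (Pow X)" by (auto simp: inj_on_def)
  have "J.pull refresh g (X, R) = (\<Sum>u\<in>(\<lambda>R'. (X, R')) ` Pow X. joint u * g u) / (\<Sum>u\<in>(\<lambda>R'. (X, R')) ` Pow X. joint u)"
    unfolding refresh_def using X same_config_class
    by (intro pull_heat_bath_on equiv_same_config) (auto simp: mem_support)
  also have "\<dots> = (\<Sum>R'\<in>Pow X. mu X * (pin_prob X R' * g (X, R'))) / (\<Sum>R'\<in>Pow X. mu X * pin_prob X R')"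
    unfolding sum.reindex[OF inj] by (intro arg_cong2[where f="(/)"] sum.cong) (auto simp: joint_def)
  also have "\<dots> = (mu X * (\<Sum>R'\<in>Pow X. pin_prob X R' * g (X, R'))) / mu X"
    by (simp add: sum_distrib_left[symmetric] pin_prob_sum[OF X(2)])
  finally show ?thesis using X(1) by (simp add: mem_support)
qed

lemma pull_censored_update:
  assumes "v \<in> V" "(X, R) \<in> pairs"
  shows "J.pull (censored_update v) g (X, R) =
    (joint (X - {v}, R) * g (X - {v}, R) + joint (insert v X, R) * g (insert v X, R))
      / (joint (X - {v}, R) + joint (insert v X, R))"
proof -
  have "X \<subseteq> V" using assms by (simp add: mem_pairs mem_support)
  moreover have "(X - {v}, R) \<noteq> (insert v X, R)" by auto
  ultimately show ?thesis unfolding censored_update_def using assms(1) censored_class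
    by (subst pull_heat_bath_on[OF equiv_censored_rel, where C="{(X - {v}, R), (insert v X, R)}"]) auto
qed

lemma pull_block_update:
  assumes v: "v \<in> V" and s: "(X, R) \<in> pairs"
  shows "J.pull (block_update v) g (X, R) =
    (mu (X - {v}) * g (X - {v}, R - {v}) + mu (insert v X) * (theta * g (insert v X, R - {v})
       + (1 - theta) * g (insert v X, insert v R))) / (mu (X - {v}) + mu (insert v X))"
proof -
  let ?C = "{(X - {v}, R - {v}), (insert v X, R - {v}), (insert v X, insert v R)}"
  have "X \<subseteq> V" using s by (simp add: mem_pairs mem_support)
  have distinct: "(X - {v}, R - {v}) \<notin> {(insert v X, R - {v}), (insert v X, insert v R)}"
    "(insert v X, R - {v}) \<noteq> (insert v X, insert v R)" by auto
  define w where "w = pin_prob (X - {v}) (R - {v})"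
  have "w > 0" unfolding w_def by (rule pin_prob_pos)
  have "J.pull (block_update v) g (X, R) = (\<Sum>u\<in>?C. joint u * g u) / (\<Sum>u\<in>?C. joint u)"
    unfolding block_update_def using v \<open>X \<subseteq> V\<close> block_class
    by (intro pull_heat_bath_on equiv_block_rel) auto
  also have "\<dots> = (w * (mu (X - {v}) * g (X - {v}, R - {v}) + mu (insert v X) * (theta * g (insert v X, R - {v})
       + (1 - theta) * g (insert v X, insert v R)))) / (w * (mu (X - {v}) + mu (insert v X)))"
    using distinct by (simp add: joint_site[OF s] w_def[symmetric] algebra_simps)
  finally show ?thesis using \<open>w > 0\<close> by simp
qed

lemma increasing_le:
  "J.increasing g \<Longrightarrow> s \<in> pairs \<Longrightarrow> t \<in> pairs \<Longrightarrow> pair_le s t \<Longrightarrow> g s \<le> g t"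
  unfolding J.increasing_def by simp

lemma mem_pairs_of_joint_pos: "fst s \<subseteq> V \<Longrightarrow> joint s > 0 \<Longrightarrow> s \<in> pairs"
  using joint_eq_0[of s] by (cases "s \<in> pairs") auto

text \<open>Resampling the pinning of a larger configuration can be coupled to pin a superset.\<close>
lemma monotone_refresh: "J.monotone_kernel refresh"
  unfolding J.monotone_kernel_def J.increasing_def[of "J.pull refresh _"]
proof (intro allI impI ballI)
  fix g :: "'v set \<times> 'v set \<Rightarrow> real" and s t
  assume g: "J.increasing g" and s: "s \<in> pairs" and t: "t \<in> pairs" and st: "pair_le s t"
  obtain X R Y S where e: "s = (X, R)" "t = (Y, S)" by (cases s, cases t)
  have XY: "X \<subseteq> Y" using st e by (simp add: pair_le_def)
  have X: "X \<in> \<Omega>" and Y: "Y \<in> \<Omega>" using s t e by (auto simp: mem_pairs)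
  have fY: "finite Y" using Y by (rule finite_of_support)
  have "J.pull refresh g s = (\<Sum>R'\<in>Pow X. pin_prob X R' * g (X, R'))"
    using pull_refresh s e by simp
  also have "\<dots> = (\<Sum>R'\<in>Pow X. \<Sum>T\<in>Pow (Y - X). pin_prob X R' * pin_prob (Y - X) T * g (X, R'))"
    using fY by (simp add: sum_distrib_left[symmetric] sum_distrib_right[symmetric] pin_prob_sum mult_ac)
  also have "\<dots> \<le> (\<Sum>R'\<in>Pow X. \<Sum>T\<in>Pow (Y - X). pin_prob X R' * pin_prob (Y - X) T * g (Y, R' \<union> T))"
  proof (intro sum_mono mult_left_mono)
    fix R' T assume "R' \<in> Pow X" "T \<in> Pow (Y - X)"
    then show "g (X, R') \<le> g (Y, R' \<union> T)"
      using X Y XY by (intro increasing_le[OF g]) (auto simp: mem_pairs pair_le_def)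
  qed (simp add: pin_prob_pos less_imp_le)
  also have "\<dots> = (\<Sum>S'\<in>Pow Y. pin_prob Y S' * g (Y, S'))"
  proof -
    have "(\<Sum>R'\<in>Pow X. \<Sum>T\<in>Pow (Y - X). pin_prob Y (R' \<union> T) * g (Y, R' \<union> T))
        = (\<Sum>S'\<in>Pow Y. pin_prob Y S' * g (Y, S'))"
      unfolding sum.cartesian_product
      by (rule sum.reindex_bij_witness[where j="\<lambda>(R', T). R' \<union> T" and i="\<lambda>S'. (S' \<inter> X, S' - X)"])
        (use XY in auto)
    moreover have "(\<Sum>R'\<in>Pow X. \<Sum>T\<in>Pow (Y - X). pin_prob Y (R' \<union> T) * g (Y, R' \<union> T))
        = (\<Sum>R'\<in>Pow X. \<Sum>T\<in>Pow (Y - X). pin_prob X R' * pin_prob (Y - X) T * g (Y, R' \<union> T))"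
      by (intro sum.cong refl) (simp add: pin_prob_split[OF fY XY])
    ultimately show ?thesis by simp
  qed
  also have "\<dots> = J.pull refresh g t" using pull_refresh t e by simp
  finally show "J.pull refresh g s \<le> J.pull refresh g t" .
qed

lemma censored_class_mass_pos:
  assumes "(X, R) \<in> pairs"
  shows "joint (X - {v}, R) + joint (insert v X, R) > 0"
proof (cases "v \<in> X")
  case True
  then have "insert v X = X" by auto
  then show ?thesis using joint_pos[OF assms] joint_nonneg[of "(X - {v}, R)"] by simp
next
  case False
  then have "X - {v} = X" by auto
  then show ?thesis using joint_pos[OF assms] joint_nonneg[of "(insert v X, R)"] by simp
qed

lemma joint_censored_cross:
  assumes s: "(X, R) \<in> pairs" and t: "(Y, S) \<in> pairs" and XY: "X \<subseteq> Y" and RS: "R \<subseteq> S" and v: "v \<in> V"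
  shows "joint (insert v X, R) * joint (Y - {v}, S) \<le> joint (X - {v}, R) * joint (insert v Y, S)"
proof (cases "v \<in> S")
  case True
  then have "joint (Y - {v}, S) = 0" by (auto simp: joint_def)
  then show ?thesis by (simp add: joint_nonneg)
next
  case False
  then have "v \<notin> R" using RS by auto
  define c where "c = theta * pin_prob (X - {v}) R * pin_prob (Y - {v}) S"
  have "c \<ge> 0" unfolding c_def using theta_pos pin_prob_pos by (simp add: less_imp_le)
  have "joint (insert v X, R) * joint (Y - {v}, S) = (mu (insert v X) * mu (Y - {v})) * c"
    "joint (X - {v}, R) * joint (insert v Y, S) = (mu (X - {v}) * mu (insert v Y)) * c"
    using joint_site(1,2)[OF s, of v] joint_site(1,2)[OF t, of v] False \<open>v \<notin> R\<close>
    unfolding c_def by (simp_all add: mult_ac)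
  moreover have "mu (insert v X) * mu (Y - {v}) \<le> mu (X - {v}) * mu (insert v Y)"
    using mu_cross XY v s t by (simp add: mem_pairs)
  ultimately show ?thesis using \<open>c \<ge> 0\<close> by (simp add: mult_right_mono)
qed

lemma monotone_censored_update:
  assumes v: "v \<in> V"
  shows "J.monotone_kernel (censored_update v)"
  unfolding J.monotone_kernel_def J.increasing_def[of "J.pull (censored_update v) _"]
proof (intro allI impI ballI)
  fix g :: "'v set \<times> 'v set \<Rightarrow> real" and s t
  assume g: "J.increasing g" and s: "s \<in> pairs" and t: "t \<in> pairs" and st: "pair_le s t"
  obtain X R Y S where e: "s = (X, R)" "t = (Y, S)" by (cases s, cases t)
  have XY: "X \<subseteq> Y" and RS: "R \<subseteq> S" using st e by (auto simp: pair_le_def)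
  have XV: "X \<subseteq> V" and YV: "Y \<subseteq> V" using s t e by (auto simp: mem_pairs mem_support)
  define a0 where "a0 = joint (X - {v}, R)"
  define a1 where "a1 = joint (insert v X, R)"
  define b0 where "b0 = joint (Y - {v}, S)"
  define b1 where "b1 = joint (insert v Y, S)"
  note weights = a0_def a1_def b0_def b1_def
  have nonneg: "a0 \<ge> 0" "a1 \<ge> 0" "b0 \<ge> 0" "b1 \<ge> 0" unfolding weights by (simp_all add: joint_nonneg)
  have pos: "a0 + a1 > 0" "b0 + b1 > 0"
    using censored_class_mass_pos s t e unfolding weights by auto
  have cross: "a1 * b0 \<le> a0 * b1"
    unfolding weights using joint_censored_cross s t e XY RS v by simp
  have le: "g u \<le> g u'" if "fst u \<subseteq> V" "fst u' \<subseteq> V" "joint u > 0" "joint u' > 0" "pair_le u u'" for u u'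
    using that by (intro increasing_le[OF g] mem_pairs_of_joint_pos)
  have "(a0 * g (X - {v}, R) + a1 * g (insert v X, R)) / (a0 + a1)
      \<le> (b0 * g (Y - {v}, S) + b1 * g (insert v Y, S)) / (b0 + b1)"
    by (rule two_point_average_mono[OF nonneg pos cross])
      (use v XV YV XY RS in \<open>auto intro!: le simp: weights pair_le_def\<close>)
  then show "J.pull (censored_update v) g s \<le> J.pull (censored_update v) g t"
    unfolding e pull_censored_update[OF v s[unfolded e]] pull_censored_update[OF v t[unfolded e]] weights .
qed

lemma monotone_block_update:
  assumes v: "v \<in> V"
  shows "J.monotone_kernel (block_update v)"
  unfolding J.monotone_kernel_def J.increasing_def[of "J.pull (block_update v) _"]
proof (intro allI impI ballI)
  fix g :: "'v set \<times> 'v set \<Rightarrow> real" and s t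
  assume g: "J.increasing g" and s: "s \<in> pairs" and t: "t \<in> pairs" and st: "pair_le s t"
  obtain X R Y S where e: "s = (X, R)" "t = (Y, S)" by (cases s, cases t)
  have XY: "X \<subseteq> Y" and RS: "R \<subseteq> S" using st e by (auto simp: pair_le_def)
  have X: "X \<in> \<Omega>" "R \<subseteq> X" and Y: "Y \<in> \<Omega>" "S \<subseteq> Y" using s t e by (auto simp: mem_pairs)
  have XV: "X \<subseteq> V" and YV: "Y \<subseteq> V" using X Y by (auto simp: mem_support)
  define a0 where "a0 = mu (X - {v})"
  define a1 where "a1 = mu (insert v X)"
  define b0 where "b0 = mu (Y - {v})"
  define b1 where "b1 = mu (insert v Y)"
  note weights = a0_def a1_def b0_def b1_def
  define y1 where "y1 = theta * g (insert v Y, S - {v}) + (1 - theta) * g (insert v Y, insert v S)"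
  have nonneg: "a0 \<ge> 0" "a1 \<ge> 0" "b0 \<ge> 0" "b1 \<ge> 0" unfolding weights by (simp_all add: mu_nonneg)
  have pos: "a0 + a1 > 0" "b0 + b1 > 0" unfolding weights using site_mass_pos X Y by auto
  have cross: "a1 * b0 \<le> a0 * b1" unfolding weights by (rule mu_cross[OF X(1) Y(1) XY v])
  have theta: "theta \<ge> 0" "theta \<le> 1" using theta_pos theta_lt_1 by auto
  have le: "g (A, B) \<le> g (A', B')"
    if "A' \<subseteq> V" "mu A > 0" "mu A' > 0" "B \<subseteq> A" "B' \<subseteq> A'" "A \<subseteq> A'" "B \<subseteq> B'" for A B A' B'
    using that by (intro increasing_le[OF g]) (auto simp: mem_pairs_iff pair_le_def)
  have "(a0 * g (X - {v}, R - {v}) + a1 * (theta * g (insert v X, R - {v}) + (1 - theta) * g (insert v X, insert v R)))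
      / (a0 + a1) \<le> (b0 * g (Y - {v}, S - {v}) + b1 * y1) / (b0 + b1)"
  proof (rule two_point_average_mono[OF nonneg pos cross])
    show "g (X - {v}, R - {v}) \<le> g (Y - {v}, S - {v})" if "a0 > 0" "b0 > 0"
      using that XV YV X Y XY RS by (intro le) (auto simp: weights)
    show "theta * g (insert v X, R - {v}) + (1 - theta) * g (insert v X, insert v R) \<le> y1"
      if "a1 > 0" "b1 > 0"
      unfolding y1_def using that v XV YV X Y XY RS theta
      by (intro add_mono mult_left_mono le) (auto simp: weights)
    show "g (X - {v}, R - {v}) \<le> y1" if "a0 > 0" "b1 > 0"
      unfolding y1_def using that v XV YV X Y XY RS theta
      by (intro convex_bound_ge le) (auto simp: weights)
  qed
  then show "J.pull (block_update v) g s \<le> J.pull (block_update v) g t"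
    unfolding e pull_block_update[OF v s[unfolded e]] pull_block_update[OF v t[unfolded e]] weights y1_def .
qed

definition block_glauber :: "'v set \<times> 'v set \<Rightarrow> 'v set \<times> 'v set \<Rightarrow> real" where
  "block_glauber = J.kernel_avg V block_update"

definition censored_glauber :: "'v set \<times> 'v set \<Rightarrow> 'v set \<times> 'v set \<Rightarrow> real" where
  "censored_glauber = J.kernel_avg V censored_update"

definition block_round :: "nat \<Rightarrow> ('v set \<times> 'v set \<Rightarrow> real) \<Rightarrow> 'v set \<times> 'v set \<Rightarrow> real" where
  "block_round m p = (J.push block_glauber ^^ m) (J.push refresh p)"

definition censored_round :: "nat \<Rightarrow> ('v set \<times> 'v set \<Rightarrow> real) \<Rightarrow> 'v set \<times> 'v set \<Rightarrow> real" where
  "censored_round m p = (J.push censored_glauber ^^ m) (J.push refresh p)"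

definition top_mass :: "'v set \<times> 'v set \<Rightarrow> real" where
  "top_mass s = (if s = (V, V) then 1 else 0)"

lemma monotone_block_glauber: "J.monotone_kernel block_glauber"
  unfolding block_glauber_def by (intro J.monotone_kernel_avg monotone_block_update)

lemma monotone_censored_glauber: "J.monotone_kernel censored_glauber"
  unfolding censored_glauber_def by (intro J.monotone_kernel_avg monotone_censored_update)

lemma reversible_block_glauber: "J.reversible block_glauber"
  unfolding block_glauber_def block_update_def
  by (intro J.reversible_kernel_avg J.reversible_heat_bath equiv_block_rel)

lemma reversible_refresh: "J.reversible refresh"
  unfolding refresh_def by (rule J.reversible_heat_bath[OF equiv_same_config])

lemma block_glauber_stoch_le_censored:
  assumes "J.increasing_density p"
  shows "J.stoch_le (J.push block_glauber p) (J.push censored_glauber p)"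
  unfolding block_glauber_def censored_glauber_def block_update_def censored_update_def
proof (rule J.stoch_le_push_kernel_avg)
  fix v assume v: "v \<in> V"
  show "J.stoch_le (J.push (J.heat_bath (block_rel v)) p) (J.push (J.heat_bath (censored_rel v)) p)"
    by (rule J.censoring_inequality[OF equiv_block_rel equiv_censored_rel censored_rel_imp_block_rel
          block_rel_chain monotone_censored_update[OF v, unfolded censored_update_def] assms])
qed

lemma rounds_stoch_le:
  assumes "J.increasing_density p" "J.stoch_le p q"
  shows "J.increasing_density ((block_round m ^^ j) p) \<and> J.stoch_le ((block_round m ^^ j) p) ((censored_round m ^^ j) q)"
proof -
  have glauber_steps: "J.increasing_density ((J.push block_glauber ^^ i) p')
      \<and> J.stoch_le ((J.push block_glauber ^^ i) p') ((J.push censored_glauber ^^ i) q')"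
    if "J.increasing_density p'" "J.stoch_le p' q'" for i p' q'
  proof (induction i)
    case (Suc i)
    then show ?case
      using J.increasing_density_push[OF reversible_block_glauber monotone_block_glauber]
        J.stoch_le_trans[OF block_glauber_stoch_le_censored J.stoch_le_push[OF monotone_censored_glauber]]
      by auto
  qed (use that in simp)
  have round: "J.increasing_density (block_round m p') \<and> J.stoch_le (block_round m p') (censored_round m q')"
    if "J.increasing_density p'" "J.stoch_le p' q'" for p' q'
    unfolding block_round_def censored_round_def using that
    by (intro glauber_steps J.increasing_density_push[OF reversible_refresh monotone_refresh]
        J.stoch_le_push[OF monotone_refresh])
  show ?thesis
    by (induction j) (use assms round in auto)
qed

lemma increasing_density_top_mass: "J.increasing_density top_mass"
  unfolding top_mass_def
  by (rule J.increasing_density_point_mass) (auto simp: mem_pairs_iff mu_V_pos pair_le_def)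

definition marginal :: "('v set \<times> 'v set \<Rightarrow> real) \<Rightarrow> 'v set \<Rightarrow> real" where
  "marginal p X = (if X \<in> \<Omega> then \<Sum>R\<in>Pow X. p (X, R) else 0)"

lemma sum_pinnings_eq_pull:
  assumes "X' \<in> \<Omega>"
  shows "(\<Sum>R'\<in>Pow X'. K s (X', R')) = J.pull K (\<lambda>u. of_bool (fst u = X')) s"
proof -
  have "J.pull K (\<lambda>u. of_bool (fst u = X')) s = (\<Sum>X\<in>\<Omega>. if X = X' then \<Sum>R'\<in>Pow X'. K s (X', R') else 0)"
    unfolding J.pull_def sum_pairs by (intro sum.cong refl) auto
  also have "\<dots> = (\<Sum>R'\<in>Pow X'. K s (X', R'))" using assms finite_support by simp
  finally show ?thesis by simp
qed

lemma marginal_push: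
  assumes "X' \<in> \<Omega>" and pull: "\<And>X R. (X, R) \<in> pairs \<Longrightarrow> J.pull K (\<lambda>u. of_bool (fst u = X')) (X, R) = k X"
  shows "marginal (J.push K p) X' = (\<Sum>X\<in>\<Omega>. marginal p X * k X)"
proof -
  have "marginal (J.push K p) X' = (\<Sum>s\<in>pairs. p s * (\<Sum>R'\<in>Pow X'. K s (X', R')))"
    using assms(1) unfolding marginal_def J.push_def
    by (simp add: sum_distrib_left) (rule sum.swap)
  also have "\<dots> = (\<Sum>X\<in>\<Omega>. \<Sum>R\<in>Pow X. p (X, R) * k X)"
    unfolding sum_pairs sum_pinnings_eq_pull[OF assms(1)] using pull
    by (intro sum.cong refl) (auto simp: mem_pairs)
  also have "\<dots> = (\<Sum>X\<in>\<Omega>. marginal p X * k X)"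
    by (simp add: marginal_def sum_distrib_right)
  finally show ?thesis .
qed

lemma marginal_push_refresh: "marginal (J.push refresh p) = marginal p"
proof
  fix X'
  show "marginal (J.push refresh p) X' = marginal p X'"
  proof (cases "X' \<in> \<Omega>")
    case True
    have "J.pull refresh (\<lambda>u. of_bool (fst u = X')) (X, R) = of_bool (X = X')" if "(X, R) \<in> pairs" for X R
      using pull_refresh[OF that] pin_prob_sum[of X] that
      by (simp add: mem_pairs finite_of_support sum_distrib_right[symmetric])
    then have "marginal (J.push refresh p) X' = (\<Sum>X\<in>\<Omega>. marginal p X * of_bool (X = X'))"
      by (rule marginal_push[OF True])
    also have "\<dots> = (\<Sum>X\<in>\<Omega>. if X = X' then marginal p X' else 0)"
      by (intro sum.cong) auto
    also have "\<dots> = marginal p X'" using True finite_support by simp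
    finally show ?thesis .
  qed (simp add: marginal_def)
qed

lemma pull_block_update_indicator:
  assumes v: "v \<in> V" and s: "(X, R) \<in> pairs" and X': "X' \<in> \<Omega>"
  shows "J.pull (block_update v) (\<lambda>u. of_bool (fst u = X')) (X, R) = site_update V mu v X X'"
proof -
  have XV: "X \<subseteq> V" and X'V: "X' \<subseteq> V" using s X' by (auto simp: mem_pairs mem_support)
  have ne: "X - {v} \<noteq> insert v X" by auto
  consider "X' = X - {v}" | "X' = insert v X" | "X' - {v} \<noteq> X - {v}" by blast
  then show ?thesis
  proof cases
    case 1
    then show ?thesis using site_update_eq[OF v XV X'V] ne by (simp add: pull_block_update[OF v s])
  next
    case 2
    then show ?thesis using site_update_eq[OF v XV X'V] ne by (simp add: pull_block_update[OF v s])
  next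
    case 3
    then have "X - {v} \<noteq> X'" "insert v X \<noteq> X'" by auto
    then show ?thesis using 3 by (simp add: pull_block_update[OF v s] site_update_def)
  qed
qed

lemma marginal_push_block_glauber: "marginal (J.push block_glauber p) = step V (glauber V mu) (marginal p)"
proof
  fix X'
  have step_support: "step V (glauber V mu) (marginal p) X' = (\<Sum>X\<in>\<Omega>. marginal p X * glauber V mu X X')"
    unfolding step_def by (rule sum.mono_neutral_right) (auto simp: finite_V marginal_def support_def)
  show "marginal (J.push block_glauber p) X' = step V (glauber V mu) (marginal p) X'"
  proof (cases "X' \<in> \<Omega>")
    case True
    have "J.pull block_glauber (\<lambda>u. of_bool (fst u = X')) (X, R) = glauber V mu X X'"
      if "(X, R) \<in> pairs" for X R
      unfolding block_glauber_def J.pull_kernel_avg glauber_eq_site_update_avg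
      using pull_block_update_indicator[OF _ that True] by simp
    then show ?thesis unfolding step_support by (rule marginal_push[OF True])
  next
    case False
    then have "glauber V mu X X' = 0" for X using glauber_support[where nu=mu, OF mu_nonneg] by blast
    then show ?thesis using False unfolding step_support by (simp add: marginal_def)
  qed
qed

lemma marginal_top_mass: "marginal top_mass = (\<lambda>Y. if Y = V then 1 else 0)"
proof
  fix Y
  have "V \<in> \<Omega>" using mu_V_pos by (simp add: mem_support)
  then show "marginal top_mass Y = (if Y = V then 1 else 0)"
    unfolding marginal_def top_mass_def using finite_V by auto
qed

lemma marginal_block_rounds:
  "marginal ((block_round m ^^ j) top_mass) = distr_at V (glauber V mu) V (j * m)"
proof (induction j)
  case 0 then show ?case by (simp add: marginal_top_mass distr_at_0)
next
  case (Suc j)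
  have "marginal ((J.push block_glauber ^^ i) p) = (step V (glauber V mu) ^^ i) (marginal p)" for i p
    by (induction i) (simp_all add: marginal_push_block_glauber)
  then have "marginal ((block_round m ^^ Suc j) top_mass)
      = (step V (glauber V mu) ^^ m) (marginal ((block_round m ^^ j) top_mass))"
    by (simp add: block_round_def marginal_push_refresh)
  also have "\<dots> = distr_at V (glauber V mu) V (j * m + m)"
    by (simp add: Suc distr_at_add)
  also have "j * m + m = Suc j * m" by simp
  finally show ?case .
qed

lemma class_mass_same_config:
  assumes "(X, R) \<in> pairs"
  shows "J.class_mass same_config (X, R) = mu X"
proof -
  have X: "X \<subseteq> V" "finite X" using assms by (auto simp: mem_pairs mem_support finite_of_support)
  have inj: "inj_on (\<lambda>R'. (X, R')) (Pow X)" by (auto simp: inj_on_def)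
  have "J.class_mass same_config (X, R) = (\<Sum>u\<in>(\<lambda>R'. (X, R')) ` Pow X. joint u * 1)"
    unfolding J.class_mass_def using X same_config_class by (subst sum_class[symmetric]) auto
  also have "\<dots> = (\<Sum>R'\<in>Pow X. mu X * pin_prob X R')"
    unfolding sum.reindex[OF inj] by (intro sum.cong) (auto simp: joint_def)
  finally show ?thesis by (simp add: sum_distrib_left[symmetric] pin_prob_sum[OF X(2)])
qed

lemma push_refresh:
  assumes "(X', R') \<in> pairs"
  shows "J.push refresh p (X', R') = marginal p X' * pin_prob X' R'"
proof -
  have X': "X' \<in> \<Omega>" "R' \<subseteq> X'" using assms by (auto simp: mem_pairs)
  have "refresh (X, R) (X', R') = (if X = X' then pin_prob X' R' else 0)" if "(X, R) \<in> pairs" for X R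
    using that assms class_mass_same_config[OF that]
    by (auto simp: refresh_def J.heat_bath_def same_config_def joint_def mem_pairs mem_support)
  then have "J.push refresh p (X', R') = (\<Sum>X\<in>\<Omega>. if X = X' then \<Sum>R\<in>Pow X'. p (X', R) * pin_prob X' R' else 0)"
    unfolding J.push_def sum_pairs by (intro sum.cong refl) (auto simp: mem_pairs)
  also have "\<dots> = marginal p X' * pin_prob X' R'"
    using X' finite_support by (simp add: marginal_def sum_distrib_right)
  finally show ?thesis .
qed

text \<open>After a refresh the pinning is in equilibrium given the configuration, so the distance to
  \<open>joint\<close> is that of the configuration marginal to \<open>mu\<close>.\<close>
lemma dist_push_refresh:
  "(\<Sum>s\<in>pairs. \<bar>J.push refresh F s - joint s\<bar>) = 2 * dTV V (marginal F) mu"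
proof -
  have "(\<Sum>s\<in>pairs. \<bar>J.push refresh F s - joint s\<bar>) = (\<Sum>X\<in>\<Omega>. \<Sum>R\<in>Pow X. \<bar>marginal F X - mu X\<bar> * pin_prob X R)"
    unfolding sum_pairs
  proof (intro sum.cong refl)
    fix X R assume "X \<in> \<Omega>" "R \<in> Pow X"
    then have "J.push refresh F (X, R) - joint (X, R) = (marginal F X - mu X) * pin_prob X R"
      by (simp add: push_refresh mem_pairs joint_def algebra_simps)
    then show "\<bar>J.push refresh F (X, R) - joint (X, R)\<bar> = \<bar>marginal F X - mu X\<bar> * pin_prob X R"
      using pin_prob_pos[of X R] by (simp add: abs_mult)
  qed
  also have "\<dots> = (\<Sum>X\<in>\<Omega>. \<bar>marginal F X - mu X\<bar>)"
    by (intro sum.cong refl) (simp add: sum_distrib_left[symmetric] pin_prob_sum finite_of_support)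
  also have "\<dots> = (\<Sum>X\<in>Pow V. \<bar>marginal F X - mu X\<bar>)"
  proof (rule sum.mono_neutral_left)
    show "\<forall>X\<in>Pow V - \<Omega>. \<bar>marginal F X - mu X\<bar> = 0"
      by (simp add: marginal_def mu_eq_0_off_support)
  qed (auto simp: finite_V mem_support)
  finally show ?thesis by (simp add: dTV_def)
qed

lemma dTV_glauber_le_censored:
  "dTV V (distr_at V (glauber V mu) V (j * m)) mu \<le> dTV V (marginal ((censored_round m ^^ j) top_mass)) mu"
proof -
  let ?F = "(block_round m ^^ j) top_mass" and ?C = "(censored_round m ^^ j) top_mass"
  have "J.increasing_density ?F" "J.stoch_le ?F ?C"
    using rounds_stoch_le[OF increasing_density_top_mass J.stoch_le_refl] by auto
  then have "J.increasing_density (J.push refresh ?F)" "J.stoch_le (J.push refresh ?F) (J.push refresh ?C)"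
    using J.increasing_density_push[OF reversible_refresh monotone_refresh]
      J.stoch_le_push[OF monotone_refresh] by auto
  then have "(\<Sum>s\<in>pairs. \<bar>J.push refresh ?F s - joint s\<bar>) \<le> (\<Sum>s\<in>pairs. \<bar>J.push refresh ?C s - joint s\<bar>)"
    by (rule J.dist_le_of_stoch_le)
  then show ?thesis unfolding dist_push_refresh marginal_block_rounds by simp
qed

definition pinned_tilt :: "'v set \<Rightarrow> 'v set \<Rightarrow> real" where
  "pinned_tilt R = cond V (tilt V theta mu) R R"

lemma tilt_nonneg: "tilt V theta mu Y \<ge> 0"
  unfolding tilt_def using mu_nonneg theta_pos by (auto intro!: divide_nonneg_nonneg sum_nonneg)

lemma pinned_tilt_nonneg: "pinned_tilt R Y \<ge> 0"
  unfolding pinned_tilt_def by (rule cond_nonneg[OF tilt_nonneg])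

lemma pinned_tilt_support:
  assumes "Y \<in> support V (pinned_tilt R)"
  shows "(Y, R) \<in> pairs"
proof -
  have "Y \<subseteq> V" "pinned_tilt R Y \<noteq> 0" using assms by (auto simp: support_def)
  then have "R \<subseteq> Y" "tilt V theta mu Y \<noteq> 0" by (auto simp: pinned_tilt_def cond_def split: if_splits)
  then have "mu Y \<noteq> 0" by (auto simp: tilt_def split: if_splits)
  then show ?thesis using mu_nonneg[of Y] \<open>Y \<subseteq> V\<close> \<open>R \<subseteq> Y\<close> by (simp add: mem_pairs_iff)
qed

lemma tilt_normaliser_pos: "(\<Sum>Y\<in>Pow V. mu Y * theta ^ card Y) > 0"
  using finite_V mu_V_pos theta_pos mu_nonneg by (intro sum_pos2[where i=V]) auto

lemma pin_mass_tilt_pos: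
  assumes "(X0, R) \<in> pairs"
  shows "pin_mass V (tilt V theta mu) R R > 0"
proof -
  have X0: "X0 \<subseteq> V" "mu X0 > 0" "R \<subseteq> X0" using assms by (auto simp: mem_pairs_iff)
  then have "tilt V theta mu X0 > 0" using theta_pos tilt_normaliser_pos by (simp add: tilt_def)
  then show ?thesis unfolding pin_mass_def
    using finite_V X0 tilt_nonneg by (intro sum_pos2[where i=X0]) auto
qed

lemma pinned_tilt_mass: "(X0, R) \<in> pairs \<Longrightarrow> (\<Sum>Y\<in>Pow V. pinned_tilt R Y) = 1"
  unfolding pinned_tilt_def using finite_V pin_mass_tilt_pos by (rule cond_mass_eq_1)

text \<open>On a fixed pinning, the tilted measure and \<open>joint\<close> differ by the factor
  \<open>(theta / (1 - theta)) ^ card R\<close> and normalisation.\<close>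
lemma pinned_tilt_proportional:
  assumes "(X0, R) \<in> pairs"
  obtains c where "c > 0" "\<And>Y. Y \<subseteq> V \<Longrightarrow> pinned_tilt R Y = c * joint (Y, R)"
proof
  define Z where "Z = (\<Sum>Y\<in>Pow V. mu Y * theta ^ card Y)"
  define P where "P = pin_mass V (tilt V theta mu) R R"
  have "Z > 0" "P > 0" unfolding Z_def P_def using tilt_normaliser_pos pin_mass_tilt_pos[OF assms] .
  show "theta ^ card R / ((1 - theta) ^ card R * Z * P) > 0"
    using theta_pos theta_lt_1 \<open>Z > 0\<close> \<open>P > 0\<close> by simp
  fix Y assume Y: "Y \<subseteq> V"
  show "pinned_tilt R Y = theta ^ card R / ((1 - theta) ^ card R * Z * P) * joint (Y, R)"
  proof (cases "R \<subseteq> Y")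
    case True
    have fY: "finite Y" using finite_subset[OF Y finite_V] .
    have "card Y = card R + card (Y - R)"
      using card_Diff_subset[OF finite_subset[OF True fY] True] card_mono[OF fY True] by simp
    then have "theta ^ card Y = theta ^ card R * theta ^ card (Y - R)" by (simp add: power_add)
    then show ?thesis
      using True Y theta_lt_1 \<open>Z > 0\<close> \<open>P > 0\<close>
      by (simp add: pinned_tilt_def cond_def tilt_def joint_def pin_prob_def Z_def[symmetric]
          P_def[symmetric] Int_absorb1 field_simps)
  qed (auto simp: pinned_tilt_def cond_def joint_def)
qed

lemma class_mass_censored:
  assumes "v \<in> V" "(X, R) \<in> pairs"
  shows "J.class_mass (censored_rel v) (X, R) = joint (X - {v}, R) + joint (insert v X, R)"
proof -
  have "X \<subseteq> V" using assms by (simp add: mem_pairs_iff)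
  then have "J.class_mass (censored_rel v) (X, R) = (\<Sum>u\<in>{(X - {v}, R), (insert v X, R)}. joint u * 1)"
    unfolding J.class_mass_def using assms(1) censored_class by (subst sum_class[symmetric]) auto
  moreover have "(X - {v}, R) \<noteq> (insert v X, R)" by auto
  ultimately show ?thesis by simp
qed

lemma censored_update_eq:
  assumes v: "v \<in> V" and s: "(X, R) \<in> pairs" and t: "(X', R') \<in> pairs"
  shows "censored_update v (X, R) (X', R') = (if R' = R then site_update V (pinned_tilt R) v X X' else 0)"
proof (cases "R' = R \<and> X' - {v} = X - {v}")
  case True
  obtain c where c: "c > 0" "\<And>Y. Y \<subseteq> V \<Longrightarrow> pinned_tilt R Y = c * joint (Y, R)"
    using pinned_tilt_proportional[OF s] by blast
  have XV: "X \<subseteq> V" and X'V: "X' \<subseteq> V" using s t by (auto simp: mem_pairs_iff)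
  have "site_update V (pinned_tilt R) v X X'
      = (c * joint (X', R)) / (c * joint (X - {v}, R) + c * joint (insert v X, R))"
    using site_update_eq[OF v XV X'V] True c(2)[OF X'V] c(2)[of "X - {v}"] c(2)[of "insert v X"] XV v
    by auto
  also have "\<dots> = joint (X', R) / (joint (X - {v}, R) + joint (insert v X, R))"
    using c(1) by (simp add: distrib_left[symmetric])
  finally have "site_update V (pinned_tilt R) v X X' = joint (X', R) / (joint (X - {v}, R) + joint (insert v X, R))" .
  then show ?thesis using True t
    by (simp add: censored_update_def J.heat_bath_def censored_rel_def class_mass_censored[OF v s])
next
  case False
  then show ?thesis by (auto simp: censored_update_def J.heat_bath_def censored_rel_def site_update_def)
qed

lemma censored_glauber_eq:
  assumes "(X, R) \<in> pairs" "(X', R') \<in> pairs"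
  shows "censored_glauber (X, R) (X', R') = (if R' = R then glauber V (pinned_tilt R) X X' else 0)"
  unfolding censored_glauber_def J.kernel_avg_def glauber_eq_site_update_avg
  using censored_update_eq[OF _ assms] by simp

definition pinning_slice :: "('v set \<times> 'v set \<Rightarrow> real) \<Rightarrow> 'v set \<Rightarrow> 'v set \<Rightarrow> real" where
  "pinning_slice q R X = (if (X, R) \<in> pairs then q (X, R) else 0)"

definition approx_field_dyn :: "nat \<Rightarrow> 'v set \<Rightarrow> 'v set \<Rightarrow> real" where
  "approx_field_dyn m X Y = (\<Sum>R\<in>Pow X. pin_prob X R * distr_at V (glauber V (pinned_tilt R)) X m Y)"

lemma tilted_glauber_support:
  assumes "(X, R) \<in> pairs" "distr_at V (glauber V (pinned_tilt R)) X t Y \<noteq> 0"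
  shows "(Y, R) \<in> pairs"
proof -
  have "(Y', R) \<in> pairs" if "glauber V (pinned_tilt R) X' Y' \<noteq> 0" for X' Y'
    using glauber_support[where nu="pinned_tilt R", OF pinned_tilt_nonneg that] by (rule pinned_tilt_support)
  then show ?thesis using distr_at_support[where S="{Y. (Y, R) \<in> pairs}", OF _ _ assms(2)] assms(1) by blast
qed

text \<open>The censored chain never changes the pinning; on each pinning it runs tilted Glauber dynamics.\<close>
lemma pinning_slice_push_censored_glauber:
  "pinning_slice (J.push censored_glauber q) R = step V (glauber V (pinned_tilt R)) (pinning_slice q R)"
proof
  fix X'
  have step_eq: "step V (glauber V (pinned_tilt R)) (pinning_slice q R) X'
      = (\<Sum>X\<in>\<Omega>. pinning_slice q R X * glauber V (pinned_tilt R) X X')"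
    unfolding step_def
    by (rule sum.mono_neutral_right) (auto simp: finite_V pinning_slice_def mem_pairs_iff support_def)
  show "pinning_slice (J.push censored_glauber q) R X' = step V (glauber V (pinned_tilt R)) (pinning_slice q R) X'"
  proof (cases "(X', R) \<in> pairs")
    case True
    have "J.push censored_glauber q (X', R) = (\<Sum>X\<in>\<Omega>. \<Sum>R0\<in>Pow X. q (X, R0) * censored_glauber (X, R0) (X', R))"
      unfolding J.push_def sum_pairs ..
    also have "\<dots> = (\<Sum>X\<in>\<Omega>. pinning_slice q R X * glauber V (pinned_tilt R) X X')"
    proof (intro sum.cong refl)
      fix X assume X: "X \<in> \<Omega>"
      have "(\<Sum>R0\<in>Pow X. q (X, R0) * censored_glauber (X, R0) (X', R))
          = (\<Sum>R0\<in>Pow X. if R0 = R then q (X, R) * glauber V (pinned_tilt R) X X' else 0)"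
        using X True by (intro sum.cong refl) (auto simp: censored_glauber_eq mem_pairs)
      also have "\<dots> = pinning_slice q R X * glauber V (pinned_tilt R) X X'"
        using X finite_of_support[OF X] by (auto simp: pinning_slice_def mem_pairs)
      finally show "(\<Sum>R0\<in>Pow X. q (X, R0) * censored_glauber (X, R0) (X', R))
          = pinning_slice q R X * glauber V (pinned_tilt R) X X'" .
    qed
    finally show ?thesis using True step_eq by (simp add: pinning_slice_def)
  next
    case False
    have "pinning_slice q R X * glauber V (pinned_tilt R) X X' = 0" for X
      using False glauber_support[where nu="pinned_tilt R", OF pinned_tilt_nonneg, of V X X']
        pinned_tilt_support by (auto simp: pinning_slice_def)
    then have "(\<Sum>X\<in>\<Omega>. pinning_slice q R X * glauber V (pinned_tilt R) X X') = 0"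
      by (intro sum.neutral) blast
    with False step_eq show ?thesis by (simp add: pinning_slice_def)
  qed
qed

lemma pinning_slice_push_refresh:
  "pinning_slice (J.push refresh p) R
    = (\<lambda>X. \<Sum>X0\<in>Pow V. pinning_slice (\<lambda>s. marginal p (fst s) * pin_prob (fst s) R) R X0 * (if X = X0 then 1 else 0))"
proof
  fix X
  have "pinning_slice (J.push refresh p) R X = pinning_slice (\<lambda>s. marginal p (fst s) * pin_prob (fst s) R) R X"
    by (simp add: pinning_slice_def push_refresh)
  moreover have "X \<notin> Pow V \<Longrightarrow> pinning_slice (\<lambda>s. marginal p (fst s) * pin_prob (fst s) R) R X = 0"
    by (auto simp: pinning_slice_def mem_pairs_iff)
  ultimately show "pinning_slice (J.push refresh p) R X
      = (\<Sum>X0\<in>Pow V. pinning_slice (\<lambda>s. marginal p (fst s) * pin_prob (fst s) R) R X0 * (if X = X0 then 1 else 0))"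
    using finite_V by (cases "X \<in> Pow V") (simp_all add: if_distrib[of "(*) _"] sum.delta cong: if_cong)
qed

lemma pinning_slice_censored_round:
  "pinning_slice (censored_round m p) R X' = (\<Sum>X0\<in>\<Omega>. if R \<subseteq> X0
      then marginal p X0 * pin_prob X0 R * distr_at V (glauber V (pinned_tilt R)) X0 m X' else 0)"
proof -
  let ?f = "\<lambda>s. marginal p (fst s) * pin_prob (fst s) R"
  have "pinning_slice ((J.push censored_glauber ^^ i) q) R = (step V (glauber V (pinned_tilt R)) ^^ i) (pinning_slice q R)"
    for i q by (induction i) (simp_all add: pinning_slice_push_censored_glauber)
  then have "pinning_slice (censored_round m p) R X'
      = (\<Sum>X0\<in>Pow V. pinning_slice ?f R X0 * distr_at V (glauber V (pinned_tilt R)) X0 m X')"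
    by (simp add: censored_round_def pinning_slice_push_refresh funpow_step_point_masses)
  also have "\<dots> = (\<Sum>X0\<in>\<Omega>. pinning_slice ?f R X0 * distr_at V (glauber V (pinned_tilt R)) X0 m X')"
    by (rule sum.mono_neutral_right) (auto simp: finite_V pinning_slice_def mem_pairs support_def)
  also have "\<dots> = (\<Sum>X0\<in>\<Omega>. if R \<subseteq> X0
      then marginal p X0 * pin_prob X0 R * distr_at V (glauber V (pinned_tilt R)) X0 m X' else 0)"
    by (intro sum.cong refl) (simp add: pinning_slice_def mem_pairs)
  finally show ?thesis .
qed

lemma approx_field_dyn_support:
  assumes "X \<in> \<Omega>" "approx_field_dyn m X Y \<noteq> 0"
  shows "Y \<in> \<Omega>"
proof -
  obtain R where "R \<in> Pow X" "pin_prob X R * distr_at V (glauber V (pinned_tilt R)) X m Y \<noteq> 0"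
    using assms(2) unfolding approx_field_dyn_def by (rule sum.not_neutral_contains_not_neutral)
  then have "(X, R) \<in> pairs" "distr_at V (glauber V (pinned_tilt R)) X m Y \<noteq> 0"
    using assms(1) by (auto simp: mem_pairs)
  then have "(Y, R) \<in> pairs" by (rule tilted_glauber_support)
  then show ?thesis by (simp add: mem_pairs)
qed

lemma marginal_censored_round: "marginal (censored_round m p) = step V (approx_field_dyn m) (marginal p)"
proof
  fix X'
  let ?d = "\<lambda>R X0. distr_at V (glauber V (pinned_tilt R)) X0 m X'"
  have step_eq: "step V (approx_field_dyn m) (marginal p) X' = (\<Sum>X0\<in>\<Omega>. marginal p X0 * approx_field_dyn m X0 X')"
    unfolding step_def by (rule sum.mono_neutral_right) (auto simp: finite_V marginal_def support_def)
  show "marginal (censored_round m p) X' = step V (approx_field_dyn m) (marginal p) X'"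
  proof (cases "X' \<in> \<Omega>")
    case True
    have "marginal (censored_round m p) X'
        = (\<Sum>R\<in>Pow X'. \<Sum>X0\<in>\<Omega>. if R \<subseteq> X0 then marginal p X0 * pin_prob X0 R * ?d R X0 else 0)"
      using True by (simp add: marginal_def pinning_slice_censored_round[symmetric] pinning_slice_def mem_pairs)
    also have "\<dots> = (\<Sum>X0\<in>\<Omega>. \<Sum>R\<in>Pow X'. if R \<subseteq> X0 then marginal p X0 * pin_prob X0 R * ?d R X0 else 0)"
      by (rule sum.swap)
    also have "\<dots> = (\<Sum>X0\<in>\<Omega>. \<Sum>R\<in>Pow X0. marginal p X0 * pin_prob X0 R * ?d R X0)"
    proof (rule sum.cong[OF refl])
      fix X0 assume X0: "X0 \<in> \<Omega>"
      let ?F = "\<lambda>R. marginal p X0 * pin_prob X0 R * ?d R X0"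
      have "(\<Sum>R\<in>Pow X'. if R \<subseteq> X0 then ?F R else 0) = (\<Sum>R\<in>Pow X' \<inter> Pow X0. ?F R)"
        using finite_of_support[OF True] by (simp add: sum.inter_restrict)
      also have "\<dots> = (\<Sum>R\<in>Pow X0. ?F R)"
      proof (rule sum.mono_neutral_left)
        show "\<forall>R\<in>Pow X0 - Pow X' \<inter> Pow X0. ?F R = 0"
          using tilted_glauber_support[of X0 _ m X'] X0 by (auto simp: mem_pairs)
      qed (use finite_of_support[OF X0] in auto)
      finally show "(\<Sum>R\<in>Pow X'. if R \<subseteq> X0 then ?F R else 0) = (\<Sum>R\<in>Pow X0. ?F R)" .
    qed
    also have "\<dots> = step V (approx_field_dyn m) (marginal p) X'"
      unfolding step_eq approx_field_dyn_def by (simp add: sum_distrib_left mult.assoc)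
    finally show ?thesis .
  next
    case False
    then have "approx_field_dyn m X0 X' = 0" if "X0 \<in> \<Omega>" for X0
      using approx_field_dyn_support[OF that] by blast
    then show ?thesis using False unfolding step_eq by (simp add: marginal_def)
  qed
qed

lemma marginal_censored_rounds:
  "marginal ((censored_round m ^^ j) top_mass) = distr_at V (approx_field_dyn m) V j"
  by (induction j) (simp_all add: marginal_top_mass distr_at_0 distr_at_Suc marginal_censored_round)

lemma field_dyn_eq:
  assumes X: "X \<subseteq> V"
  shows "field_dyn V mu theta X Y = (\<Sum>R\<in>Pow X. pin_prob X R * pinned_tilt R Y)"
  unfolding field_dyn_def
proof (rule sum.reindex_bij_witness[where i="\<lambda>R. V - R" and j="\<lambda>S. V - S"])
  fix S assume S: "S \<in> {S \<in> Pow V. V - X \<subseteq> S}"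
  show "V - (V - S) = S" "V - S \<in> Pow X" using S by auto
  have "V - S = X - S" "X - (V - S) = S \<inter> X" using S X by auto
  then show "pin_prob X (V - S) * pinned_tilt (V - S) Y =
      theta ^ card (S \<inter> X) * (1 - theta) ^ card (X - S) * cond V (tilt V theta mu) (V - S) (V - S) Y"
    by (simp add: pin_prob_def pinned_tilt_def)
qed (use X in auto)

lemma pin_prob_nonneg: "pin_prob X R \<ge> 0"
  by (rule less_imp_le[OF pin_prob_pos])

lemma pin_prob_sum_subset: "X \<subseteq> V \<Longrightarrow> (\<Sum>R\<in>Pow X. pin_prob X R) = 1"
  by (rule pin_prob_sum[OF finite_subset[OF _ finite_V]])

lemma sub_stochastic_field_dyn: "sub_stochastic V (field_dyn V mu theta)"
proof (rule sub_stochasticI)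
  show "field_dyn V mu theta X Y \<ge> 0" for X Y
    unfolding field_dyn_def using theta_pos theta_lt_1 pinned_tilt_nonneg[unfolded pinned_tilt_def]
    by (auto intro!: sum_nonneg mult_nonneg_nonneg)
  have "sub_stochastic V (\<lambda>X Y. pinned_tilt R Y)" for R
    by (rule sub_stochasticI) (simp add: pinned_tilt_nonneg, simp add: pinned_tilt_def cond_mass_le_1[OF finite_V])
  then have "sub_stochastic V (\<lambda>X Y. \<Sum>R\<in>Pow X. pin_prob X R * pinned_tilt R Y)"
    by (rule sub_stochastic_mixture[OF finite_V _ pin_prob_nonneg pin_prob_sum_subset])
  then show "X \<subseteq> V \<Longrightarrow> (\<Sum>Y\<in>Pow V. field_dyn V mu theta X Y) \<le> 1" for X
    by (simp add: field_dyn_eq sub_stochastic_def)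
qed

lemma pinned_tilt_times_mass:
  assumes "Y \<subseteq> V"
  shows "pinned_tilt R Y * (\<Sum>X\<in>Pow V. joint (X, R)) = joint (Y, R)"
proof (cases "\<exists>X0. (X0, R) \<in> pairs")
  case True
  then obtain X0 where X0: "(X0, R) \<in> pairs" by blast
  obtain c where c: "c > 0" "\<And>Y. Y \<subseteq> V \<Longrightarrow> pinned_tilt R Y = c * joint (Y, R)"
    using pinned_tilt_proportional[OF X0] by blast
  have "c * (\<Sum>X\<in>Pow V. joint (X, R)) = 1"
    using pinned_tilt_mass[OF X0] c(2) by (simp add: sum_distrib_left)
  moreover have "pinned_tilt R Y * (\<Sum>X\<in>Pow V. joint (X, R)) = joint (Y, R) * (c * (\<Sum>X\<in>Pow V. joint (X, R)))"
    using c(2)[OF assms] by (simp add: mult_ac)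
  ultimately show ?thesis by simp
next
  case False
  then have "joint (X, R) = 0" if "X \<subseteq> V" for X using joint_eq_0[of "(X, R)"] that by simp
  then show ?thesis using assms by simp
qed

lemma stationary_field_dyn: "stationary V (field_dyn V mu theta) mu"
  unfolding stationary_def
proof
  fix Y assume Y: "Y \<in> Pow V"
  have "step V (field_dyn V mu theta) mu Y = (\<Sum>X\<in>Pow V. \<Sum>R\<in>Pow V. joint (X, R) * pinned_tilt R Y)"
    unfolding step_def
  proof (rule sum.cong[OF refl])
    fix X assume X: "X \<in> Pow V"
    have "mu X * field_dyn V mu theta X Y = (\<Sum>R\<in>Pow X. joint (X, R) * pinned_tilt R Y)"
      using X by (simp add: field_dyn_eq sum_distrib_left joint_def mult.assoc)
    also have "\<dots> = (\<Sum>R\<in>Pow V. joint (X, R) * pinned_tilt R Y)"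
      by (rule sum.mono_neutral_left) (use X finite_V in \<open>auto simp: joint_def\<close>)
    finally show "mu X * field_dyn V mu theta X Y = (\<Sum>R\<in>Pow V. joint (X, R) * pinned_tilt R Y)" .
  qed
  also have "\<dots> = (\<Sum>R\<in>Pow V. pinned_tilt R Y * (\<Sum>X\<in>Pow V. joint (X, R)))"
    by (subst sum.swap) (simp add: sum_distrib_left mult.commute)
  also have "\<dots> = (\<Sum>R\<in>Pow V. joint (Y, R))"
    using Y pinned_tilt_times_mass by simp
  also have "\<dots> = (\<Sum>R\<in>Pow Y. mu Y * pin_prob Y R)"
    by (rule sum.mono_neutral_cong_right) (use Y finite_V in \<open>auto simp: joint_def\<close>)
  also have "\<dots> = mu Y"
    using Y by (simp add: sum_distrib_left[symmetric] pin_prob_sum_subset)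
  finally show "step V (field_dyn V mu theta) mu Y = mu Y" .
qed

lemma sub_stochastic_tilted_glauber: "sub_stochastic V (glauber V (pinned_tilt R))"
  by (rule sub_stochastic_glauber[OF finite_V pinned_tilt_nonneg])

lemma sub_stochastic_approx_field_dyn: "sub_stochastic V (approx_field_dyn m)"
proof -
  have "sub_stochastic V (\<lambda>X. distr_at V (glauber V (pinned_tilt R)) X m)" for R
    by (rule sub_stochasticI)
      (simp_all add: distr_at_nonneg[OF sub_stochastic_tilted_glauber]
        distr_at_mass_le_1[OF finite_V sub_stochastic_tilted_glauber])
  then show ?thesis unfolding approx_field_dyn_def
    by (rule sub_stochastic_mixture[OF finite_V _ pin_prob_nonneg pin_prob_sum_subset])
qed

lemma dTV_approx_field_dyn_le:
  assumes close: "\<And>X R. (X, R) \<in> pairs \<Longrightarrow> dTV V (distr_at V (glauber V (pinned_tilt R)) X m) (pinned_tilt R) \<le> \<delta>"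
    and X: "X \<in> \<Omega>"
  shows "dTV V (approx_field_dyn m X) (field_dyn V mu theta X) \<le> \<delta>"
proof -
  let ?d = "\<lambda>R. distr_at V (glauber V (pinned_tilt R)) X m"
  have XV: "X \<subseteq> V" using X by (simp add: mem_support)
  have "approx_field_dyn m X Y - field_dyn V mu theta X Y = (\<Sum>R\<in>Pow X. pin_prob X R * (?d R Y - pinned_tilt R Y))"
    for Y unfolding approx_field_dyn_def field_dyn_eq[OF XV] by (simp add: right_diff_distrib sum_subtractf)
  then have "(\<Sum>Y\<in>Pow V. \<bar>approx_field_dyn m X Y - field_dyn V mu theta X Y\<bar>)
      = (\<Sum>Y\<in>Pow V. \<bar>\<Sum>R\<in>Pow X. pin_prob X R * (?d R Y - pinned_tilt R Y)\<bar>)"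
    by simp
  also have "\<dots> \<le> (\<Sum>R\<in>Pow X. \<bar>pin_prob X R\<bar> * (\<Sum>Y\<in>Pow V. \<bar>?d R Y - pinned_tilt R Y\<bar>))"
    by (rule sum_abs_kernel_le) (simp add: finite_of_support[OF X])
  also have "\<dots> \<le> (\<Sum>R\<in>Pow X. pin_prob X R * (2 * \<delta>))"
  proof (intro sum_mono)
    fix R assume "R \<in> Pow X"
    then have "(\<Sum>Y\<in>Pow V. \<bar>?d R Y - pinned_tilt R Y\<bar>) \<le> 2 * \<delta>"
      using close[of X R] X by (simp add: mem_pairs dTV_def)
    then show "\<bar>pin_prob X R\<bar> * (\<Sum>Y\<in>Pow V. \<bar>?d R Y - pinned_tilt R Y\<bar>) \<le> pin_prob X R * (2 * \<delta>)"
      using pin_prob_pos[of X R] by (simp add: mult_left_mono)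
  qed
  also have "\<dots> = 2 * \<delta>" using pin_prob_sum[OF finite_of_support[OF X]] by (simp add: sum_distrib_right[symmetric])
  finally show ?thesis by (simp add: dTV_def)
qed

lemma dTV_glauber_le_field_dyn:
  assumes "\<And>X R. (X, R) \<in> pairs \<Longrightarrow> dTV V (distr_at V (glauber V (pinned_tilt R)) X m) (pinned_tilt R) \<le> \<delta>"
  shows "dTV V (distr_at V (glauber V mu) V (k * m)) mu \<le> dTV V (distr_at V (field_dyn V mu theta) V k) mu + k * \<delta>"
proof -
  have "V \<in> \<Omega>" using mu_V_pos by (simp add: mem_support)
  have support: "distr_at V (approx_field_dyn m) V t X \<noteq> 0 \<Longrightarrow> X \<in> \<Omega>" for t X
    by (rule distr_at_support[where S=\<Omega>, OF \<open>V \<in> \<Omega>\<close> approx_field_dyn_support])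
  have "dTV V (distr_at V (approx_field_dyn m) V k) (distr_at V (field_dyn V mu theta) V k) \<le> k * \<delta>"
    by (rule dTV_distr_at_le[OF finite_V sub_stochastic_approx_field_dyn sub_stochastic_field_dyn subset_refl
          dTV_approx_field_dyn_le[OF assms] support])
  then show ?thesis
    using dTV_glauber_le_censored[of k m] dTV_triangle[of V "distr_at V (approx_field_dyn m) V k" mu
        "distr_at V (field_dyn V mu theta) V k"] dTV_commute[of V "distr_at V (field_dyn V mu theta) V k"]
    unfolding marginal_censored_rounds by linarith
qed

lemma dTV_tilted_le_of_T_tilted:
  assumes "T_tilted V mu theta \<delta> \<le> enat m" "(X, R) \<in> pairs"
  shows "dTV V (distr_at V (glauber V (pinned_tilt R)) X m) (pinned_tilt R) \<le> \<delta>"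
proof -
  have X: "X \<subseteq> V" "mu X > 0" "R \<subseteq> X" using assms(2) by (simp_all add: mem_pairs_iff)
  have "pin_mass V mu R R > 0"
    unfolding pin_mass_def using finite_V X mu_nonneg by (intro sum_pos2[where i=X]) auto
  then have "T_GD V (pinned_tilt R) \<delta> \<le> T_tilted V mu theta \<delta>"
    unfolding T_tilted_def pinned_tilt_def using X by (intro SUP_upper) auto
  moreover obtain c where "c > 0" "\<And>Y. Y \<subseteq> V \<Longrightarrow> pinned_tilt R Y = c * joint (Y, R)"
    using pinned_tilt_proportional[OF assms(2)] by blast
  then have "X \<in> support V (pinned_tilt R)"
    using joint_pos[OF assms(2)] X by (simp add: support_def)
  then have "T_GD_from V (pinned_tilt R) X \<delta> \<le> T_GD V (pinned_tilt R) \<delta>"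
    unfolding T_GD_def by (rule SUP_upper)
  ultimately have "mix_from V (glauber V (pinned_tilt R)) (pinned_tilt R) X \<delta> \<le> enat m"
    using assms(1) unfolding T_GD_from_def by (meson order_trans)
  then show ?thesis
    by (rule dTV_le_of_mix_from_le[OF finite_V sub_stochastic_tilted_glauber
          stationary_glauber[OF finite_V V_nonempty pinned_tilt_nonneg]])
qed

lemma dTV_field_dyn_le_of_T_FD:
  assumes "T_FD V mu theta eps \<le> enat k"
  shows "dTV V (distr_at V (field_dyn V mu theta) V k) mu \<le> eps"
proof -
  have "V \<in> \<Omega>" using mu_V_pos by (simp add: mem_support)
  then have "mix_from V (field_dyn V mu theta) mu V eps \<le> enat k"
    using assms unfolding T_FD_def by (meson SUP_upper order_trans)
  then show ?thesis
    by (rule dTV_le_of_mix_from_le[OF finite_V sub_stochastic_field_dyn stationary_field_dyn])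
qed

text \<open>Mixing in no steps to accuracy below \<open>1/2\<close> from every configuration of the support
  forces the support to be a single configuration.\<close>
lemma dTV_top_eq_0_of_T_tilted_eq_0:
  assumes "T_tilted V mu theta \<delta> = 0" "\<delta> < 1 / 2"
  shows "dTV V (\<lambda>Y. if Y = V then 1 else 0) mu = 0"
proof -
  let ?pt = "\<lambda>x Y. if Y = x then 1 else (0::real)"
  have "V \<in> \<Omega>" using mu_V_pos by (simp add: mem_support)
  have close: "dTV V (?pt X) (pinned_tilt {}) \<le> \<delta>" if "X \<in> \<Omega>" for X
    using dTV_tilted_le_of_T_tilted[of \<delta> 0 X "{}"] assms(1) that
    by (simp add: mem_pairs distr_at_0 zero_enat_def)
  have single: "X = V" if X: "X \<in> \<Omega>" for X
  proof (rule ccontr)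
    assume "X \<noteq> V"
    then have "dTV V (?pt V) (?pt X) = 1"
      using X by (intro dTV_point_masses[OF finite_V]) (auto simp: mem_support)
    moreover have "dTV V (?pt V) (?pt X) \<le> 2 * \<delta>"
      using close[OF X] close[OF \<open>V \<in> \<Omega>\<close>] dTV_triangle[of V "?pt V" "?pt X" "pinned_tilt {}"]
        dTV_commute[of V "?pt X" "pinned_tilt {}"] by linarith
    ultimately show False using assms(2) by simp
  qed
  have "(\<Sum>X\<in>Pow V. mu X) = mu V + (\<Sum>X\<in>Pow V - {V}. mu X)"
    using finite_V by (simp add: sum.remove)
  moreover have "(\<Sum>X\<in>Pow V - {V}. mu X) = 0"
    using single mu_eq_0_off_support by (intro sum.neutral) blast
  ultimately have "mu V = 1" using dist by (simp add: is_dist_def)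
  then have "\<bar>?pt V Y - mu Y\<bar> = 0" for Y
    using single mu_eq_0_off_support[of Y] by (cases "Y = V") auto
  then show ?thesis by (simp add: dTV_def)
qed

lemma T_GD_from_top_eq_0:
  assumes "T_FD V mu theta (eps / 2) = 0 \<or> T_tilted V mu theta \<delta> = 0" "\<delta> < 1 / 2" "eps > 0"
  shows "T_GD_from V mu V eps = 0"
proof -
  have "dTV V (\<lambda>Y. if Y = V then 1 else 0) mu \<le> eps"
    using assms dTV_top_eq_0_of_T_tilted_eq_0 dTV_field_dyn_le_of_T_FD[of "eps / 2" 0]
    by (auto simp: distr_at_0 zero_enat_def)
  then show ?thesis by (rule T_GD_from_eq_0)
qed

lemma T_GD_from_top_le:
  assumes "T_FD V mu theta (eps / 2) = enat k" "k > 0" "T_tilted V mu theta (eps / (2 * real k)) = enat m"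
  shows "T_GD_from V mu V eps \<le> enat (k * m)"
proof -
  have "dTV V (distr_at V (glauber V mu) V (k * m)) mu
      \<le> dTV V (distr_at V (field_dyn V mu theta) V k) mu + k * (eps / (2 * real k))"
    using assms(3) by (intro dTV_glauber_le_field_dyn dTV_tilted_le_of_T_tilted) simp
  also have "\<dots> \<le> eps / 2 + eps / 2"
    using dTV_field_dyn_le_of_T_FD[of "eps / 2" k] assms(1,2) by simp
  finally show ?thesis unfolding T_GD_from_def by (intro mix_from_le_of_dTV_le) simp
qed

end

theorem theorem1p9:
  fixes V :: "'v set" and mu :: "'v set \<Rightarrow> real" and theta eps :: real
  assumes "finite V"
    and "is_dist V mu"
    and "monotone_system V mu"
    and "mu V > 0"
    and "0 < theta" and "theta < 1"
    and "0 < eps" and "eps < 1"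
  shows "T_GD_from V mu V eps \<le>
           T_FD V mu theta (eps / 2) *
           T_tilted V mu theta (eps / (2 * real (the_enat (T_FD V mu theta (eps / 2)))))"
proof (cases "V = {}")
  case True
  then have "dTV V (\<lambda>Y. if Y = V then 1 else 0) mu = 0" using assms(2) by (simp add: dTV_def is_dist_def)
  then show ?thesis using assms(7) by (simp add: T_GD_from_eq_0)
next
  case False
  then interpret field_coupling V mu theta using assms by unfold_locales
  define k where "k = T_FD V mu theta (eps / 2)"
  define \<delta> where "\<delta> = eps / (2 * real (the_enat k))"
  consider (zero) "k = 0 \<or> T_tilted V mu theta \<delta> = 0"
    | (infinite) "k = \<infinity> \<and> T_tilted V mu theta \<delta> \<noteq> 0 \<or> T_tilted V mu theta \<delta> = \<infinity> \<and> k \<noteq> 0"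
    | (finite) k' m where "k = enat k'" "k' > 0" "T_tilted V mu theta \<delta> = enat m"
    by (cases k; cases "T_tilted V mu theta \<delta>") (auto simp: zero_enat_def)
  then show ?thesis
  proof cases
    case zero
    \<comment> \<open>\<open>the_enat \<infinity>\<close> is unspecified, so \<open>k = \<infinity>\<close> may meet \<open>T_tilted = 0\<close>; still \<open>\<delta> < 1/2\<close>.\<close>
    have "\<delta> < 1 / 2" using assms(7,8) by (cases "the_enat k") (auto simp: \<delta>_def field_simps)
    then show ?thesis using zero assms(7) T_GD_from_top_eq_0 by (simp add: k_def)
  next
    case infinite
    then have "k * T_tilted V mu theta \<delta> = \<infinity>" by (simp add: imult_is_infinity)
    then show ?thesis by (simp add: k_def \<delta>_def)
  next
    case finite
    then show ?thesis using T_GD_from_top_le[of eps k' m] by (simp add: k_def \<delta>_def)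
  qed
qed

end
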